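(* Assume $\boldsymbol\Gamma$ is irreducible, fix $\Lambda^{(1)}_j\ge 0$, set $\Lambda_j=\theta\Lambda^{(1)}_j$ for $\theta>0$, and let $-\mu(\theta)$ (resp. $-\lambda(\theta)$) be the largest eigenvalue of $\boldsymbol\Theta-\boldsymbol\Psi$ (resp. of $\boldsymbol\Gamma-\mathrm{diag}(\Lambda_j)$). Let $\lambda^{(1)}=\frac1N\sum_j\Lambda^{(1)}_j$. Then $\mu(\theta)=2\theta\lambda^{(1)}+O(\theta^2)$ as $\theta\to0$. If moreover $\Gamma_{jl}=\Gamma>0$ for all $j\neq l$, then $$\mu(\theta)=2\theta\lambda^{(1)}-\theta^2\frac{2(N+2)}{N^2(N+1)\Gamma}\sum_{j=0}^{N-1}(\Lambda^{(1)}_j-\lambda^{(1)})^2+O(\theta^3),$$ the corresponding unit eigenvector is $\mathbf W(\theta)=\mathbf W^{(0)}+\theta\mathbf W^{(1)}+O(\theta^2)$ with $W^{(0)}_{jl}=c_N:=\sqrt2/\sqrt{N(N+1)}$ and $W^{(1)}_{jl}=-\frac{c_N}{\Gamma N}(\Lambda^{(1)}_j+\Lambda^{(1)}_l-2\lambda^{(1)})$ for $j\le l$, and $$\mu(\theta)-2\lambda(\theta)=-\frac{2\theta^2}{N^2(N+1)\Gamma}\sum_{j=0}^{N-1}(\Lambda^{(1)}_j-\lambda^{(1)})^2+O(\theta^3),$$ which is negative for small $\theta$ as soon as the $\Lambda^{(1)}_j$ are not all equal.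
   Context: Let $N\ge 2$. Let $\boldsymbol\Gamma=(\Gamma_{jl})_{j,l=0}^{N-1}$ be a real symmetric matrix with $\Gamma_{jl}\ge 0$ for $j\neq l$ and $\Gamma_{jj}=-\sum_{l\neq j}\Gamma_{jl}$. $\boldsymbol\Gamma$ is called irreducible if the graph on $\{0,\dots,N-1\}$ with an edge between $j\neq l$ whenever $\Gamma_{jl}>0$ is connected. Let $\mathcal T_N=\{(j,l)\in\mathbb N^2:0\le j\le l\le N-1\}$; for $\mathbf S\in\mathbb R^{\mathcal T_N}$, $S_{jl}$ with $j>l$ means $S_{lj}$. Define $(\boldsymbol\Psi\mathbf S)_{jl}=(\Lambda_j+\Lambda_l)S_{jl}$ and $(\boldsymbol\Theta\mathbf S)_{jl}=2\Gamma_{jl}\mathbf 1_{j\neq l}(S_{jj}+S_{ll}-2S_{jl})+\sum_{n\notin\{j,l\}}[\Gamma_{ln}(S_{jn}-S_{jl})+\Gamma_{jn}(S_{nl}-S_{jl})]$. *)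

theory Defs
  imports Complex_Main "HOL-Library.Landau_Symbols"
begin

text \<open>Index set T_N = {(j,l). 0 <= j <= l <= N-1}; elements of R^{T_N} are functions
  on nat \<times> nat, only their values on T_N matter.\<close>
definition triN :: "nat \<Rightarrow> (nat \<times> nat) set" where
  "triN N = {(j,l). j \<le> l \<and> l < N}"

definition sget :: "(nat \<times> nat \<Rightarrow> real) \<Rightarrow> nat \<Rightarrow> nat \<Rightarrow> real" where
  "sget S j l = (if j \<le> l then S (j,l) else S (l,j))"

definition gen_matrix :: "nat \<Rightarrow> (nat \<Rightarrow> nat \<Rightarrow> real) \<Rightarrow> bool" where
  "gen_matrix N G \<longleftrightarrow>
     (\<forall>j<N. \<forall>l<N. G j l = G l j) \<and>
     (\<forall>j<N. \<forall>l<N. j \<noteq> l \<longrightarrow> G j l \<ge> 0) \<and>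
     (\<forall>j<N. G j j = - (\<Sum>l\<in>{..<N} - {j}. G j l))"

definition irreducible_gen :: "nat \<Rightarrow> (nat \<Rightarrow> nat \<Rightarrow> real) \<Rightarrow> bool" where
  "irreducible_gen N G \<longleftrightarrow>
     (\<forall>j<N. \<forall>l<N. (\<lambda>a b. a < N \<and> b < N \<and> a \<noteq> b \<and> G a b > 0)\<^sup>*\<^sup>* j l)"

definition PsiOp :: "(nat \<Rightarrow> real) \<Rightarrow> (nat \<times> nat \<Rightarrow> real) \<Rightarrow> (nat \<times> nat \<Rightarrow> real)" where
  "PsiOp Lam S = (\<lambda>(j,l). (Lam j + Lam l) * sget S j l)"

definition ThetaOp :: "nat \<Rightarrow> (nat \<Rightarrow> nat \<Rightarrow> real) \<Rightarrow> (nat \<times> nat \<Rightarrow> real) \<Rightarrow> (nat \<times> nat \<Rightarrow> real)" where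
  "ThetaOp N G S = (\<lambda>(j,l).
      2 * G j l * (if j \<noteq> l then 1 else 0) * (sget S j j + sget S l l - 2 * sget S j l)
    + (\<Sum>n\<in>{..<N} - {j,l}. G l n * (sget S j n - sget S j l) + G j n * (sget S n l - sget S j l)))"

definition op_eigvec :: "nat \<Rightarrow> (nat \<Rightarrow> nat \<Rightarrow> real) \<Rightarrow> (nat \<Rightarrow> real) \<Rightarrow> real \<Rightarrow> (nat \<times> nat \<Rightarrow> real) \<Rightarrow> bool" where
  "op_eigvec N G Lam e S \<longleftrightarrow> (\<exists>p\<in>triN N. S p \<noteq> 0) \<and>
     (\<forall>p\<in>triN N. ThetaOp N G S p - PsiOp Lam S p = e * S p)"

definition op_eigval :: "nat \<Rightarrow> (nat \<Rightarrow> nat \<Rightarrow> real) \<Rightarrow> (nat \<Rightarrow> real) \<Rightarrow> real \<Rightarrow> bool" where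
  "op_eigval N G Lam e \<longleftrightarrow> (\<exists>S. op_eigvec N G Lam e S)"

definition muF :: "nat \<Rightarrow> (nat \<Rightarrow> nat \<Rightarrow> real) \<Rightarrow> (nat \<Rightarrow> real) \<Rightarrow> real" where
  "muF N G Lam = - Max {e. op_eigval N G Lam e}"

definition mat_eigval :: "nat \<Rightarrow> (nat \<Rightarrow> nat \<Rightarrow> real) \<Rightarrow> real \<Rightarrow> bool" where
  "mat_eigval N M e \<longleftrightarrow> (\<exists>v. (\<exists>j<N. v j \<noteq> 0) \<and> (\<forall>j<N. (\<Sum>l<N. M j l * v l) = e * v j))"

definition lamF :: "nat \<Rightarrow> (nat \<Rightarrow> nat \<Rightarrow> real) \<Rightarrow> (nat \<Rightarrow> real) \<Rightarrow> real" where
  "lamF N G Lam = - Max {e. mat_eigval N (\<lambda>j l. G j l - (if j = l then Lam j else 0)) e}"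

end

theory Submission
  imports Defs "HOL-Analysis.Function_Topology" "Jordan_Normal_Form.Spectral_Radius"
begin

text \<open>Both \<open>\<mu>(\<theta>)\<close> and \<open>\<lambda>(\<theta>)\<close> are minus the top eigenvalue \<open>\<rho>(\<theta>)\<close> of a matrix
  \<open>M - \<theta> diag b\<close>, where \<open>M\<close> (namely \<open>\<Theta>\<close> or \<open>\<Gamma>\<close>) is symmetric, kills the constants and
  is negative definite on their orthogonal complement. For \<open>\<Theta>\<close> the gap comes from a maximum
  principle: by irreducibility an eigenvector with nonnegative eigenvalue has constant sign, so it
  is not orthogonal to the constants. The top eigenvalue is the
  maximum of the Rayleigh quotient. Testing it with the constant vector and absorbing cross terms
  into the spectral gap gives \<open>\<rho>(\<theta>) = -\<theta> mean b + O(\<theta>\<^sup>2)\<close>. Testing with \<open>1 + \<theta> w\<close>, where the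
  corrector \<open>w\<close> solves \<open>M w = b - mean b\<close>, gives the second-order coefficient
  \<open>-\<langle>w, b - mean b\<rangle> / card I\<close> up to \<open>O(\<theta>\<^sup>3)\<close>, and the gap also shows that the unit
  eigenvector is \<open>(1 + \<theta> w) / sqrt (card I) + O(\<theta>\<^sup>2)\<close>. For uniform rates \<open>\<Gamma>\<close> acts as
  \<open>-g N\<close> on mean-zero vectors, so both correctors are explicit, and comparing the two
  second-order coefficients yields \<open>\<mu> - 2\<lambda>\<close>.\<close>

section \<open>Symmetric eigenvalue problems on a finite index set\<close>

definition inner_on :: "'i set \<Rightarrow> ('i \<Rightarrow> real) \<Rightarrow> ('i \<Rightarrow> real) \<Rightarrow> real" where
  "inner_on I x y = (\<Sum>i\<in>I. x i * y i)"

definition mat_vec :: "'i set \<Rightarrow> ('i \<Rightarrow> 'i \<Rightarrow> real) \<Rightarrow> ('i \<Rightarrow> real) \<Rightarrow> 'i \<Rightarrow> real" where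
  "mat_vec I M x = (\<lambda>i. \<Sum>k\<in>I. M i k * x k)"

definition eigenvalue_on :: "'i set \<Rightarrow> ('i \<Rightarrow> 'i \<Rightarrow> real) \<Rightarrow> real \<Rightarrow> bool" where
  "eigenvalue_on I M e \<longleftrightarrow> (\<exists>v. (\<exists>i\<in>I. v i \<noteq> 0) \<and> (\<forall>i\<in>I. mat_vec I M v i = e * v i))"

definition symmetric_on :: "'i set \<Rightarrow> ('i \<Rightarrow> 'i \<Rightarrow> real) \<Rightarrow> bool" where
  "symmetric_on I M \<longleftrightarrow> (\<forall>i\<in>I. \<forall>k\<in>I. M i k = M k i)"

definition top_eigenvalue :: "'i set \<Rightarrow> ('i \<Rightarrow> 'i \<Rightarrow> real) \<Rightarrow> real" where
  "top_eigenvalue I M = Max {e. eigenvalue_on I M e}"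

definition minus_diag :: "('i \<Rightarrow> 'i \<Rightarrow> real) \<Rightarrow> ('i \<Rightarrow> real) \<Rightarrow> 'i \<Rightarrow> 'i \<Rightarrow> real" where
  "minus_diag M b = (\<lambda>i k. M i k - (if i = k then b i else 0))"

lemma inner_on_commute: "inner_on I x y = inner_on I y x"
  unfolding inner_on_def by (simp add: mult.commute)

lemma inner_on_cong:
  "(\<And>i. i \<in> I \<Longrightarrow> x i = x' i) \<Longrightarrow> (\<And>i. i \<in> I \<Longrightarrow> y i = y' i) \<Longrightarrow> inner_on I x y = inner_on I x' y'"
  unfolding inner_on_def by simp

lemma inner_on_add_left: "inner_on I (\<lambda>i. x i + y i) z = inner_on I x z + inner_on I y z"
  unfolding inner_on_def by (simp add: distrib_right sum.distrib)

lemma inner_on_add_right: "inner_on I z (\<lambda>i. x i + y i) = inner_on I z x + inner_on I z y"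
  unfolding inner_on_def by (simp add: distrib_left sum.distrib)

lemma inner_on_diff_left: "inner_on I (\<lambda>i. x i - y i) z = inner_on I x z - inner_on I y z"
  unfolding inner_on_def by (simp add: left_diff_distrib sum_subtractf)

lemma inner_on_scale_left: "inner_on I (\<lambda>i. c * x i) z = c * inner_on I x z"
  unfolding inner_on_def by (simp add: sum_distrib_left mult.assoc)

lemma inner_on_scale_right: "inner_on I z (\<lambda>i. c * x i) = c * inner_on I z x"
  unfolding inner_on_def by (simp add: sum_distrib_left mult.left_commute)

lemma inner_on_const_left: "inner_on I (\<lambda>i. c) z = c * inner_on I (\<lambda>i. 1) z"
  unfolding inner_on_def by (simp add: sum_distrib_left)

lemma inner_on_one_one: "inner_on I (\<lambda>_. 1) (\<lambda>_. 1) = real (card I)"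
  unfolding inner_on_def by simp

lemma inner_on_nonneg: "inner_on I x x \<ge> 0"
  unfolding inner_on_def by (simp add: sum_nonneg)

lemma inner_on_eq_0D: "finite I \<Longrightarrow> inner_on I x x = 0 \<Longrightarrow> i \<in> I \<Longrightarrow> x i = 0"
  unfolding inner_on_def by (simp add: sum_nonneg_eq_0_iff)

lemma inner_on_pos: "finite I \<Longrightarrow> \<exists>i\<in>I. x i \<noteq> 0 \<Longrightarrow> inner_on I x x > 0"
  using inner_on_eq_0D inner_on_nonneg by (metis order_le_neq_trans)

lemma square_le_inner_on: "finite I \<Longrightarrow> i \<in> I \<Longrightarrow> (x i)^2 \<le> inner_on I x x"
  unfolding inner_on_def using member_le_sum[of i I "\<lambda>i. x i * x i"] by (simp add: power2_eq_square)

lemma inner_on_delta_left: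
  assumes "finite I" "i \<in> I"
  shows "inner_on I (\<lambda>j. if j = i then 1 else 0) x = x i"
proof -
  have "inner_on I (\<lambda>j. if j = i then 1 else 0) x = (\<Sum>j\<in>I. if j = i then x j else 0)"
    unfolding inner_on_def by (intro sum.cong) auto
  also have "\<dots> = x i" using assms by simp
  finally show ?thesis .
qed

lemma inner_on_add_square_le:
  "inner_on I (\<lambda>i. x i + y i) (\<lambda>i. x i + y i) \<le> 2 * inner_on I x x + 2 * inner_on I y y"
proof -
  have "(x i + y i)^2 \<le> 2 * (x i)^2 + 2 * (y i)^2" for i
    using zero_le_power2[of "x i - y i"] by (simp add: power2_eq_square algebra_simps)
  then have "(\<Sum>i\<in>I. (x i + y i)^2) \<le> (\<Sum>i\<in>I. 2 * (x i)^2 + 2 * (y i)^2)"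
    by (rule sum_mono)
  then show ?thesis
    unfolding inner_on_def by (simp add: sum.distrib sum_distrib_left power2_eq_square)
qed

lemma amgm_weighted:
  fixes g c p q :: real
  assumes "g > 0"
  shows "c * (p * q) \<le> g / 2 * p^2 + c^2 / (2 * g) * q^2"
proof -
  have "2*g*(g/2*p^2 + c^2/(2*g)*q^2) - 2*g*(c*(p*q)) = (g*p - c*q)^2"
    using assms by (simp add: field_simps power2_eq_square)
  then have "2*g*(c*(p*q)) \<le> 2*g*(g/2*p^2 + c^2/(2*g)*q^2)"
    using zero_le_power2[of "g*p - c*q"] by linarith
  then show ?thesis using assms by simp
qed

lemma amgm_inner_on:
  assumes "g > 0"
  shows "c * inner_on I p q \<le> g / 2 * inner_on I p p + c^2 / (2 * g) * inner_on I q q"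
proof -
  have "c * inner_on I p q = (\<Sum>i\<in>I. c * (p i * q i))"
    unfolding inner_on_def by (simp add: sum_distrib_left)
  also have "\<dots> \<le> (\<Sum>i\<in>I. g / 2 * (p i)^2 + c^2 / (2 * g) * (q i)^2)"
    by (intro sum_mono amgm_weighted[OF assms])
  also have "\<dots> = g / 2 * inner_on I p p + c^2 / (2 * g) * inner_on I q q"
    unfolding inner_on_def by (simp add: sum.distrib sum_distrib_left power2_eq_square)
  finally show ?thesis .
qed

lemma mat_vec_add: "mat_vec I M (\<lambda>i. x i + y i) = (\<lambda>i. mat_vec I M x i + mat_vec I M y i)"
  unfolding mat_vec_def by (simp add: distrib_left sum.distrib)

lemma mat_vec_diff: "mat_vec I M (\<lambda>i. x i - y i) = (\<lambda>i. mat_vec I M x i - mat_vec I M y i)"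
  unfolding mat_vec_def by (simp add: right_diff_distrib sum_subtractf)

lemma mat_vec_scale: "mat_vec I M (\<lambda>i. c * y i) = (\<lambda>i. c * mat_vec I M y i)"
  unfolding mat_vec_def by (simp add: sum_distrib_left mult.left_commute)

lemma mat_vec_const: "mat_vec I M (\<lambda>i. c) = (\<lambda>i. c * mat_vec I M (\<lambda>_. 1) i)"
  unfolding mat_vec_def by (simp add: sum_distrib_left mult.commute)

lemma inner_on_mat_vec_cong:
  "(\<And>i. i \<in> I \<Longrightarrow> mat_vec I M x i = z i) \<Longrightarrow> inner_on I y (mat_vec I M x) = inner_on I y z"
  unfolding inner_on_def by simp

lemma inner_on_mat_vec_symmetric:
  assumes "symmetric_on I M"
  shows "inner_on I x (mat_vec I M y) = inner_on I (mat_vec I M x) y"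
proof -
  have "inner_on I x (mat_vec I M y) = (\<Sum>i\<in>I. \<Sum>k\<in>I. x i * M i k * y k)"
    unfolding inner_on_def mat_vec_def by (simp add: sum_distrib_left mult.assoc)
  also have "\<dots> = (\<Sum>k\<in>I. \<Sum>i\<in>I. x i * M i k * y k)" by (rule sum.swap)
  also have "\<dots> = (\<Sum>k\<in>I. (\<Sum>i\<in>I. M k i * x i) * y k)"
    using assms unfolding symmetric_on_def by (intro sum.cong refl) (simp add: sum_distrib_right sum_distrib_left mult_ac)
  also have "\<dots> = inner_on I (mat_vec I M x) y" unfolding inner_on_def mat_vec_def by simp
  finally show ?thesis .
qed

lemma mat_vec_minus_diag:
  assumes "finite I" "i \<in> I"
  shows "mat_vec I (minus_diag M b) x i = mat_vec I M x i - b i * x i"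
proof -
  have "mat_vec I (minus_diag M b) x i = (\<Sum>k\<in>I. M i k * x k - (if i = k then b i * x k else 0))"
    unfolding mat_vec_def minus_diag_def by (intro sum.cong) (auto simp: algebra_simps)
  then show ?thesis using assms by (simp add: sum_subtractf mat_vec_def)
qed

lemma symmetric_on_minus_diag: "symmetric_on I M \<Longrightarrow> symmetric_on I (minus_diag M b)"
  unfolding symmetric_on_def minus_diag_def by auto


lemma finite_eigenvalues_on:
  assumes "finite I"
  shows "finite {e. eigenvalue_on I M e}"
proof -
  obtain h where h: "bij_betw h {0..<card I} I" using ex_bij_betw_nat_finite[OF assms] by blast
  define m where "m = card I"
  define A :: "real mat" where "A = mat m m (\<lambda>(r,c). M (h r) (h c))"
  have A: "A \<in> carrier_mat m m" unfolding A_def by simp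
  have "e \<in> spectrum A" if e: "eigenvalue_on I M e" for e
  proof -
    obtain v where v: "\<exists>i\<in>I. v i \<noteq> 0" "\<forall>i\<in>I. mat_vec I M v i = e * v i"
      using e unfolding eigenvalue_on_def by auto
    define vv where "vv = vec m (\<lambda>r. v (h r))"
    have hr: "h r \<in> I" if "r < m" for r using h that unfolding bij_betw_def m_def by auto
    have "vv \<noteq> 0\<^sub>v m"
    proof
      assume "vv = 0\<^sub>v m"
      obtain i where i: "i \<in> I" "v i \<noteq> 0" using v(1) by auto
      then obtain r where "r < m" "h r = i"
        using h unfolding bij_betw_def m_def by (metis atLeastLessThan_iff imageE lessThan_atLeast0 lessThan_iff)
      then have "vv $ r = 0" using \<open>vv = 0\<^sub>v m\<close> by simp
      then show False using \<open>r < m\<close> \<open>h r = i\<close> i unfolding vv_def by simp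
    qed
    moreover have "A *\<^sub>v vv = e \<cdot>\<^sub>v vv"
    proof (rule eq_vecI)
      fix r assume "r < dim_vec (e \<cdot>\<^sub>v vv)"
      then have r: "r < m" unfolding vv_def by simp
      have "(A *\<^sub>v vv) $ r = (\<Sum>c\<in>{0..<m}. M (h r) (h c) * v (h c))"
        using r unfolding A_def vv_def by (simp add: scalar_prod_def)
      also have "\<dots> = mat_vec I M v (h r)"
        using sum.reindex_bij_betw[OF h, of "\<lambda>k. M (h r) k * v k"] unfolding m_def mat_vec_def by simp
      also have "\<dots> = e * v (h r)" using v(2) hr[OF r] by simp
      finally show "(A *\<^sub>v vv) $ r = (e \<cdot>\<^sub>v vv) $ r" using r unfolding vv_def by simp
    qed (simp add: A_def vv_def)
    ultimately have "eigenvector A vv e" unfolding eigenvector_def using A by (simp add: vv_def)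
    then show ?thesis unfolding spectrum_def eigenvalue_def by auto
  qed
  then have "{e. eigenvalue_on I M e} \<subseteq> spectrum A" by blast
  then show ?thesis using card_finite_spectrum(1)[OF A] by (rule finite_subset)
qed

lemma linear_coeff_zero_if_quadratic_nonpos:
  fixes b c :: real
  assumes "\<forall>t. 2 * t * b + t^2 * c \<le> 0"
  shows "b = 0"
proof (rule ccontr)
  assume "b \<noteq> 0"
  define t where "t = b / (\<bar>c\<bar> + 1)"
  have "b * b > 0" using \<open>b \<noteq> 0\<close> by (metis not_real_square_gt_zero)
  then have tb: "t * b > 0" unfolding t_def by (simp add: add_pos_nonneg)
  have "t^2 * \<bar>c\<bar> = (t * b) * (\<bar>c\<bar> / (\<bar>c\<bar> + 1))"
    unfolding t_def by (simp add: field_simps power2_eq_square)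
  also have "\<dots> \<le> t * b" using tb by (intro mult_left_le) auto
  finally have "t^2 * \<bar>c\<bar> \<le> t * b" .
  moreover have "t^2 * c \<ge> - (t^2 * \<bar>c\<bar>)" using mult_left_mono[of "-\<bar>c\<bar>" c "t^2"] by simp
  ultimately have "2 * t * b + t^2 * c > 0" using tb by linarith
  with assms show False by (meson not_le)
qed

lemma rayleigh_le_of_unit:
  assumes fin: "finite I"
    and unit: "\<And>x. (\<forall>i. i \<notin> I \<longrightarrow> x i = 0) \<Longrightarrow> inner_on I x x = 1 \<Longrightarrow> inner_on I x (mat_vec I M x) \<le> R"
  shows "inner_on I x (mat_vec I M x) \<le> R * inner_on I x x"
proof -
  define Q where "Q y = inner_on I y (mat_vec I M y)" for y
  have Q_scale: "Q (\<lambda>i. c * y i) = c^2 * Q y" for c y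
    unfolding Q_def mat_vec_scale inner_on_scale_left inner_on_scale_right by (simp add: power2_eq_square)
  define y where "y i = (if i \<in> I then x i else 0)" for i
  have Qy: "Q y = Q x" unfolding Q_def y_def by (intro inner_on_cong) (auto simp: mat_vec_def)
  have iy: "inner_on I y y = inner_on I x x" unfolding y_def by (intro inner_on_cong) auto
  show ?thesis
  proof (cases "inner_on I y y = 0")
    case True
    then have "\<forall>i\<in>I. y i = 0" using inner_on_eq_0D[OF fin] by blast
    then have "Q y = 0" unfolding Q_def inner_on_def by simp
    then show ?thesis using Qy iy True unfolding Q_def by simp
  next
    case False
    then have pos: "inner_on I y y > 0" using inner_on_nonneg[of I y] by linarith
    define c where "c = 1 / sqrt (inner_on I y y)"
    have c2: "c^2 * inner_on I y y = 1" unfolding c_def power_divide using pos by simp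
    have "\<forall>i. i \<notin> I \<longrightarrow> c * y i = 0" unfolding y_def by simp
    moreover have "inner_on I (\<lambda>i. c * y i) (\<lambda>i. c * y i) = 1"
      using c2 unfolding inner_on_scale_left inner_on_scale_right by (simp add: power2_eq_square)
    ultimately have "Q (\<lambda>i. c * y i) \<le> R" using unit[of "\<lambda>i. c * y i"] unfolding Q_def by blast
    moreover have "c^2 * (R * inner_on I y y) = R" using c2 by (simp add: algebra_simps)
    ultimately have "c^2 * Q y \<le> c^2 * (R * inner_on I y y)" using Q_scale[of c y] by linarith
    moreover have "c^2 > 0" using c2 by (cases "c = 0") auto
    ultimately show ?thesis using Qy iy unfolding Q_def by simp
  qed
qed

lemma rayleigh_attains_max:
  assumes fin: "finite I" and ne: "I \<noteq> {}"
  obtains x0 where "inner_on I x0 x0 = 1"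
    and "\<And>x. inner_on I x (mat_vec I M x) \<le> inner_on I x0 (mat_vec I M x0) * inner_on I x x"
proof -
  define S :: "'a \<Rightarrow> real set" where "S i = (if i \<in> I then {-1..1} else {0})" for i
  define f where "f x = inner_on I x (mat_vec I M x)" for x
  define K where "K = {x. (\<forall>i. x i \<in> S i) \<and> inner_on I x x = 1}"
  have "compactin (product_topology (\<lambda>i. euclidean) UNIV) (Pi\<^sub>E UNIV S)"
    unfolding compactin_PiE by (auto simp: S_def)
  then have "compact (Pi\<^sub>E UNIV S)" by (simp add: euclidean_product_topology compactin_euclidean_iff)
  moreover have "closed {x::'a\<Rightarrow>real. inner_on I x x = 1}"
    unfolding inner_on_def
    by (intro closed_Collect_eq continuous_intros continuous_on_product_coordinates)
  moreover have "K = Pi\<^sub>E UNIV S \<inter> {x. inner_on I x x = 1}" unfolding K_def by auto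
  ultimately have cK: "compact K" using compact_Int_closed by metis
  obtain i0 where i0: "i0 \<in> I" using ne by auto
  have "(\<lambda>i. if i = i0 then 1 else 0) \<in> K"
    using inner_on_delta_left[OF fin i0] i0 unfolding K_def S_def by auto
  then have Kne: "K \<noteq> {}" by auto
  have cf: "continuous_on K f"
    unfolding f_def inner_on_def mat_vec_def
    by (intro continuous_intros continuous_on_subset[OF continuous_on_product_coordinates]) auto
  obtain x0 where x0: "x0 \<in> K" "\<And>x. x \<in> K \<Longrightarrow> f x \<le> f x0"
    using continuous_attains_sup[OF cK Kne cf] by blast
  have "f x \<le> f x0 * inner_on I x x" for x
    unfolding f_def
  proof (rule rayleigh_le_of_unit[OF fin])
    fix y assume y: "\<forall>i. i \<notin> I \<longrightarrow> y i = 0" "inner_on I y y = 1"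
    have "y i \<in> S i" for i
    proof (cases "i \<in> I")
      case True
      then have "(y i)^2 \<le> 1" using square_le_inner_on[OF fin True, of y] y(2) by simp
      then show ?thesis using True abs_le_square_iff[of "y i" 1] unfolding S_def by auto
    qed (use y(1) S_def in auto)
    then show "inner_on I y (mat_vec I M y) \<le> inner_on I x0 (mat_vec I M x0)"
      using x0(2)[of y] y(2) unfolding K_def f_def by auto
  qed
  moreover have "inner_on I x0 x0 = 1" using x0(1) unfolding K_def by simp
  ultimately show ?thesis using that unfolding f_def by blast
qed

text \<open>First variation of the Rayleigh quotient at a maximiser, in the direction of a coordinate
  vector, gives the eigenvalue equation in that coordinate.\<close>
lemma rayleigh_maximiser_is_eigenvector:
  assumes fin: "finite I" and sym: "symmetric_on I M"
    and max: "\<And>x. inner_on I x (mat_vec I M x) \<le> R * inner_on I x x"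
    and attained: "inner_on I x0 (mat_vec I M x0) = R * inner_on I x0 x0"
    and i: "i \<in> I"
  shows "mat_vec I M x0 i = R * x0 i"
proof -
  define h :: "'a \<Rightarrow> real" where "h j = (if j = i then 1 else 0)" for j
  define f where "f x = inner_on I x (mat_vec I M x) - R * inner_on I x x" for x
  have expand: "f (\<lambda>j. x0 j + t * h j) = f x0 + 2 * t * (mat_vec I M x0 i - R * x0 i) + t^2 * f h" for t
  proof -
    have "inner_on I h (mat_vec I M x0) = mat_vec I M x0 i" "inner_on I h x0 = x0 i"
      unfolding h_def using inner_on_delta_left[OF fin i] by auto
    moreover have "inner_on I x0 (mat_vec I M h) = inner_on I h (mat_vec I M x0)"
      using inner_on_mat_vec_symmetric[OF sym] inner_on_commute by metis
    ultimately show ?thesis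
      unfolding f_def mat_vec_add mat_vec_scale inner_on_add_left inner_on_add_right
        inner_on_scale_left inner_on_scale_right
      using inner_on_commute[of I x0 h] by (simp add: algebra_simps power2_eq_square)
  qed
  have "2 * t * (mat_vec I M x0 i - R * x0 i) + t^2 * f h \<le> 0" for t
    using expand[of t] max[of "\<lambda>j. x0 j + t * h j"] attained unfolding f_def by simp
  then show ?thesis using linear_coeff_zero_if_quadratic_nonpos[of "mat_vec I M x0 i - R * x0 i" "f h"] by simp
qed

lemma eigenvalue_le_rayleigh_bound:
  assumes "finite I" "eigenvalue_on I M e" "\<And>x. inner_on I x (mat_vec I M x) \<le> U * inner_on I x x"
  shows "e \<le> U"
proof -
  obtain v where v: "\<exists>i\<in>I. v i \<noteq> 0" "\<forall>i\<in>I. mat_vec I M v i = e * v i"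
    using assms(2) unfolding eigenvalue_on_def by auto
  have "inner_on I v (mat_vec I M v) = e * inner_on I v v"
    unfolding inner_on_def using v(2) by (simp add: sum_distrib_left mult_ac)
  then show ?thesis using assms(3)[of v] inner_on_pos[OF assms(1) v(1)] by simp
qed

lemma
  assumes "finite I" "I \<noteq> {}" "symmetric_on I M"
  shows top_eigenvalue_is_eigenvalue: "eigenvalue_on I M (top_eigenvalue I M)"
    and rayleigh_le_top_eigenvalue:
      "inner_on I x (mat_vec I M x) \<le> top_eigenvalue I M * inner_on I x x"
proof -
  obtain x0 where x0: "inner_on I x0 x0 = 1"
    and max: "\<And>x. inner_on I x (mat_vec I M x) \<le> inner_on I x0 (mat_vec I M x0) * inner_on I x x"
    using rayleigh_attains_max[OF assms(1,2)] by blast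
  define R where "R = inner_on I x0 (mat_vec I M x0)"
  have "\<exists>i\<in>I. x0 i \<noteq> 0"
  proof (rule ccontr)
    assume "\<not> ?thesis"
    then have "inner_on I x0 x0 = 0" unfolding inner_on_def by simp
    with x0 show False by simp
  qed
  moreover have "\<forall>i\<in>I. mat_vec I M x0 i = R * x0 i"
    using rayleigh_maximiser_is_eigenvector[OF assms(1,3)] max x0 unfolding R_def by simp
  ultimately have eig: "eigenvalue_on I M R" unfolding eigenvalue_on_def by blast
  have "top_eigenvalue I M = R"
    unfolding top_eigenvalue_def
    using finite_eigenvalues_on[OF assms(1)] eig eigenvalue_le_rayleigh_bound[OF assms(1) _ max]
    by (intro Max_eqI) (auto simp: R_def)
  then show "eigenvalue_on I M (top_eigenvalue I M)"
    "inner_on I x (mat_vec I M x) \<le> top_eigenvalue I M * inner_on I x x"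
    using eig max unfolding R_def by auto
qed


section \<open>Perturbation of a gapped generator by a diagonal potential\<close>

lemma bigo_at_right_0I:
  fixes f :: "real \<Rightarrow> real"
  assumes "eventually (\<lambda>\<theta>. \<bar>f \<theta>\<bar> \<le> C * \<theta>^k) (at_right 0)"
  shows "f \<in> O[at_right 0](\<lambda>\<theta>. \<theta>^k)"
proof (rule bigoI[of _ C])
  show "eventually (\<lambda>x. norm (f x) \<le> C * norm (x^k)) (at_right 0)"
    using eventually_conj[OF assms eventually_at_right_less[of 0]]
    by (rule eventually_mono) (simp add: abs_of_pos)
qed

lemma eventually_at_right_0_le: "(c::real) > 0 \<Longrightarrow> eventually (\<lambda>\<theta>. 0 < \<theta> \<and> \<theta> \<le> c) (at_right 0)"
  using eventually_at_right_real[of 0 c] by (rule eventually_mono) auto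

lemma eventually_neg_if_bigo_expansion:
  fixes f :: "real \<Rightarrow> real"
  assumes "(\<lambda>\<theta>. f \<theta> + K * \<theta>^2) \<in> O[at_right 0](\<lambda>\<theta>. \<theta>^3)" and "K > 0"
  shows "eventually (\<lambda>\<theta>. f \<theta> < 0) (at_right 0)"
proof -
  obtain C where C: "C > 0" "eventually (\<lambda>\<theta>. norm (f \<theta> + K * \<theta>^2) \<le> C * norm (\<theta>^3)) (at_right 0)"
    using landau_o.bigE[OF assms(1)] by blast
  have "f \<theta> < 0" if bound: "\<bar>f \<theta> + K * \<theta>^2\<bar> \<le> C * \<bar>\<theta>^3\<bar>" and \<theta>: "0 < \<theta>" "\<theta> \<le> K / (2 * C)" for \<theta>
  proof -
    have "C * \<theta> \<le> K / 2" using \<theta> C(1) by (simp add: field_simps)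
    then have "C * \<theta>^3 \<le> K / 2 * \<theta>^2"
      using \<theta>(1) mult_right_mono[of "C * \<theta>" "K / 2" "\<theta>^2"] by (simp add: power3_eq_cube power2_eq_square mult_ac)
    moreover have "K / 2 * \<theta>^2 > 0" using \<theta>(1) assms(2) by simp
    ultimately show ?thesis using bound \<theta>(1) by (simp add: abs_le_iff)
  qed
  moreover have "K / (2 * C) > 0" using C(1) assms(2) by simp
  then have "eventually (\<lambda>\<theta>. 0 < \<theta> \<and> \<theta> \<le> K / (2 * C)) (at_right 0)"
    by (rule eventually_at_right_0_le)
  ultimately show ?thesis using C(2) by (auto elim: eventually_elim2)
qed

definition mean_on :: "'i set \<Rightarrow> ('i \<Rightarrow> real) \<Rightarrow> real" where
  "mean_on I b = (\<Sum>i\<in>I. b i) / real (card I)"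

definition has_spectral_gap :: "'i set \<Rightarrow> ('i \<Rightarrow> 'i \<Rightarrow> real) \<Rightarrow> real \<Rightarrow> bool" where
  "has_spectral_gap I M \<gamma> \<longleftrightarrow> \<gamma> > 0 \<and>
     (\<forall>z. inner_on I z (\<lambda>_. 1) = 0 \<longrightarrow> inner_on I z (mat_vec I M z) \<le> - \<gamma> * inner_on I z z)"

text \<open>Both eigenvalue problems of the theorem are instances, with \<open>L = \<Lambda>\<^sup>(\<^sup>1\<^sup>)\<close>:
  \<open>\<mu>\<close> with \<open>M = \<Theta>\<close> and \<open>b = pair_sum L\<close> on \<open>triN N\<close>, and
  \<open>\<lambda>\<close> with \<open>M = \<Gamma>\<close> and \<open>b = L\<close> on \<open>{..<N}\<close>.\<close>
locale gapped_generator =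
  fixes I :: "'i set" and M :: "'i \<Rightarrow> 'i \<Rightarrow> real" and b :: "'i \<Rightarrow> real"
  assumes finite_I: "finite I" and nonempty_I: "I \<noteq> {}" and symmetric: "symmetric_on I M"
    and kills_constants: "\<And>i. i \<in> I \<Longrightarrow> mat_vec I M (\<lambda>_. 1) i = 0"
    and spectral_gap: "\<exists>\<gamma>. has_spectral_gap I M \<gamma>"
    and b_nonneg: "\<And>i. i \<in> I \<Longrightarrow> b i \<ge> 0"
begin

abbreviation "dimI \<equiv> real (card I)"

abbreviation "b_mean \<equiv> mean_on I b"

abbreviation "rho \<theta> \<equiv> top_eigenvalue I (minus_diag M (\<lambda>i. \<theta> * b i))"

definition "gap = (SOME \<gamma>. has_spectral_gap I M \<gamma>)"
definition "b_dev i = b i - b_mean"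
definition "b_inner x y = (\<Sum>i\<in>I. b i * x i * y i)"

lemma gap_pos: "gap > 0"
  and gap_bound: "inner_on I z (\<lambda>_. 1) = 0 \<Longrightarrow> inner_on I z (mat_vec I M z) \<le> - gap * inner_on I z z"
  using someI_ex[OF spectral_gap] unfolding gap_def has_spectral_gap_def by auto

lemma dimI_pos: "dimI > 0"
  using finite_I nonempty_I by (simp add: card_gt_0_iff)

lemma sum_b: "(\<Sum>i\<in>I. b i) = dimI * b_mean"
  using dimI_pos unfolding mean_on_def by simp

lemma b_mean_nonneg: "b_mean \<ge> 0"
  unfolding mean_on_def using b_nonneg by (simp add: sum_nonneg)

lemma b_inner_nonneg: "b_inner y y \<ge> 0"
  unfolding b_inner_def using b_nonneg by (intro sum_nonneg) (simp add: mult.assoc)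

lemma rayleigh_minus_diag:
  "inner_on I x (mat_vec I (minus_diag M (\<lambda>i. \<theta> * b i)) x) = inner_on I x (mat_vec I M x) - \<theta> * b_inner x x"
proof -
  have "inner_on I x (mat_vec I (minus_diag M (\<lambda>i. \<theta> * b i)) x)
      = inner_on I x (\<lambda>i. mat_vec I M x i - \<theta> * (b i * x i))"
    using mat_vec_minus_diag[OF finite_I] by (intro inner_on_mat_vec_cong) (simp add: mult.assoc)
  also have "\<dots> = inner_on I x (mat_vec I M x) - \<theta> * b_inner x x"
    unfolding inner_on_def b_inner_def by (simp add: sum_subtractf sum_distrib_left algebra_simps)
  finally show ?thesis .
qed

lemma rayleigh_le_rho: "inner_on I x (mat_vec I (minus_diag M (\<lambda>i. \<theta> * b i)) x) \<le> rho \<theta> * inner_on I x x"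
  using rayleigh_le_top_eigenvalue[OF finite_I nonempty_I symmetric_on_minus_diag[OF symmetric]] .

lemma rho_le_of_rayleigh_bound: "(\<And>x. inner_on I x (mat_vec I (minus_diag M (\<lambda>i. \<theta> * b i)) x) \<le> U * inner_on I x x) \<Longrightarrow> rho \<theta> \<le> U"
  using eigenvalue_le_rayleigh_bound[OF finite_I
      top_eigenvalue_is_eigenvalue[OF finite_I nonempty_I symmetric_on_minus_diag[OF symmetric]]] .

lemma mat_vec_shift: "i \<in> I \<Longrightarrow> mat_vec I M (\<lambda>i. a + y i) i = mat_vec I M y i"
  unfolding mat_vec_add mat_vec_const[of I M a] using kills_constants by simp

lemma inner_one_mat_vec: "inner_on I (\<lambda>_. 1) (mat_vec I M y) = 0"
proof -
  have "inner_on I (\<lambda>_. 1) (mat_vec I M y) = inner_on I (mat_vec I M (\<lambda>_. 1)) y"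
    by (rule inner_on_mat_vec_symmetric[OF symmetric])
  also have "\<dots> = 0" unfolding inner_on_def using kills_constants by simp
  finally show ?thesis .
qed

lemma sum_b_times: "(\<Sum>i\<in>I. b i * y i) = inner_on I b_dev y + b_mean * inner_on I y (\<lambda>_. 1)"
  unfolding inner_on_def b_dev_def
  by (simp add: algebra_simps sum.distrib sum_subtractf sum_distrib_left sum_distrib_right)

lemma split_constant:
  obtains a y where "x = (\<lambda>i. a + y i)" "inner_on I y (\<lambda>_. 1) = 0" "a = inner_on I x (\<lambda>_. 1) / dimI"
proof -
  define a where "a = inner_on I x (\<lambda>_. 1) / dimI"
  have "inner_on I (\<lambda>i. x i - a) (\<lambda>_. 1) = inner_on I x (\<lambda>_. 1) - a * dimI"
    unfolding inner_on_diff_left inner_on_const_left[of I a] inner_on_one_one ..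
  then have "inner_on I (\<lambda>i. x i - a) (\<lambda>_. 1) = 0" unfolding a_def using dimI_pos by simp
  then show ?thesis using that[of a "\<lambda>i. x i - a"] unfolding a_def by simp
qed

context
  fixes y :: "'i \<Rightarrow> real"
  assumes y_perp: "inner_on I y (\<lambda>_. 1) = 0"
begin

lemma inner_shift: "inner_on I (\<lambda>i. a + y i) (\<lambda>i. a + y i) = a^2 * dimI + inner_on I y y"
proof -
  have "inner_on I (\<lambda>i. a + y i) (\<lambda>i. a + y i) = (\<Sum>i\<in>I. a*a + (2*a) * y i + y i * y i)"
    unfolding inner_on_def by (intro sum.cong) (auto simp: algebra_simps)
  also have "\<dots> = dimI * (a*a) + (2*a) * (\<Sum>i\<in>I. y i) + (\<Sum>i\<in>I. y i * y i)"
    by (simp add: sum.distrib sum_distrib_left)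
  also have "(\<Sum>i\<in>I. y i) = 0" using y_perp unfolding inner_on_def by simp
  finally show ?thesis unfolding inner_on_def by (simp add: power2_eq_square)
qed

lemma rayleigh_minus_diag_shift:
  "inner_on I (\<lambda>i. a + y i) (mat_vec I (minus_diag M (\<lambda>i. \<theta> * b i)) (\<lambda>i. a + y i))
     = inner_on I y (mat_vec I M y) - \<theta> * (a^2 * dimI * b_mean + 2 * a * inner_on I b_dev y + b_inner y y)"
proof -
  have "inner_on I (\<lambda>i. a + y i) (mat_vec I M (\<lambda>i. a + y i)) = inner_on I (\<lambda>i. a + y i) (mat_vec I M y)"
    using mat_vec_shift by (rule inner_on_mat_vec_cong)
  also have "\<dots> = inner_on I y (mat_vec I M y)"
    unfolding inner_on_add_left inner_on_const_left[of I a] inner_one_mat_vec by simp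
  finally have M_part: "inner_on I (\<lambda>i. a + y i) (mat_vec I M (\<lambda>i. a + y i)) = inner_on I y (mat_vec I M y)" .
  have "b_inner (\<lambda>i. a + y i) (\<lambda>i. a + y i) = (\<Sum>i\<in>I. a^2 * b i + 2 * a * (b i * y i) + b i * y i * y i)"
    unfolding b_inner_def by (intro sum.cong) (auto simp: algebra_simps power2_eq_square)
  also have "\<dots> = a^2 * (\<Sum>i\<in>I. b i) + 2 * a * (\<Sum>i\<in>I. b i * y i) + b_inner y y"
    unfolding b_inner_def by (simp add: sum.distrib sum_distrib_left)
  finally have "b_inner (\<lambda>i. a + y i) (\<lambda>i. a + y i) = a^2 * dimI * b_mean + 2 * a * inner_on I b_dev y + b_inner y y"
    using sum_b_times y_perp sum_b by (simp add: mult_ac)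
  then show ?thesis unfolding rayleigh_minus_diag M_part by simp
qed

end

lemma rho_ge_first_order: "rho \<theta> \<ge> - \<theta> * b_mean"
proof -
  have "inner_on I (\<lambda>i. 1 + 0) (mat_vec I (minus_diag M (\<lambda>i. \<theta> * b i)) (\<lambda>i. 1 + 0)) = - \<theta> * b_mean * dimI"
    using rayleigh_minus_diag_shift[of "\<lambda>_. 0" 1 \<theta>] by (simp add: inner_on_def b_inner_def)
  moreover have "inner_on I (\<lambda>i. 1 + 0) (\<lambda>i. 1 + 0) = dimI" using inner_on_one_one by simp
  ultimately have "(- \<theta> * b_mean) * dimI \<le> rho \<theta> * dimI" using rayleigh_le_rho[of "\<lambda>i. 1 + 0" \<theta>] by simp
  then show ?thesis using mult_right_le_imp_le[OF _ dimI_pos] by simp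
qed

lemma rho_le_first_order:
  assumes \<theta>: "\<theta> \<ge> 0" "2 * \<theta> * b_mean \<le> gap"
  shows "rho \<theta> \<le> - \<theta> * b_mean + \<theta>^2 * (2 * inner_on I b_dev b_dev / (gap * dimI))"
proof (rule rho_le_of_rayleigh_bound)
  fix x
  obtain a y where x: "x = (\<lambda>i. a + y i)" and y: "inner_on I y (\<lambda>_. 1) = 0"
    and "a = inner_on I x (\<lambda>_. 1) / dimI" by (rule split_constant)
  define C where "C = 2 * inner_on I b_dev b_dev / (gap * dimI)"
  have C: "C \<ge> 0" unfolding C_def using inner_on_nonneg[of I b_dev] gap_pos dimI_pos by simp
  have norm: "inner_on I x x = a^2 * dimI + inner_on I y y" unfolding x by (rule inner_shift[OF y])
  text \<open>AM-GM absorbs the cross term into half of the gap.\<close>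
  have am: "(-2 * \<theta> * a) * inner_on I b_dev y
      \<le> gap / 2 * inner_on I y y + \<theta>^2 * C * (a^2 * dimI)"
    using amgm_inner_on[OF gap_pos, of "-2 * \<theta> * a" I y b_dev] inner_on_commute[of I y b_dev]
      gap_pos dimI_pos unfolding C_def by (simp add: field_simps power2_eq_square)
  have "\<theta> * b_mean * inner_on I y y \<le> gap / 2 * inner_on I y y"
    using \<theta> inner_on_nonneg[of I y] by (intro mult_right_mono) auto
  moreover have "\<theta>^2 * C * (a^2 * dimI) \<le> \<theta>^2 * C * inner_on I x x"
    unfolding norm using inner_on_nonneg[of I y] C by (intro mult_left_mono) auto
  moreover have "\<theta> * b_inner y y \<ge> 0" using b_inner_nonneg \<theta> by simp
  moreover note gap_bound[OF y] am
  ultimately show "inner_on I x (mat_vec I (minus_diag M (\<lambda>i. \<theta> * b i)) x)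
      \<le> (- \<theta> * b_mean + \<theta>^2 * (2 * inner_on I b_dev b_dev / (gap * dimI))) * inner_on I x x"
    unfolding C_def[symmetric] x rayleigh_minus_diag_shift[OF y] inner_shift[OF y]
    by (simp add: algebra_simps) 
qed

lemma eventually_small: "eventually (\<lambda>\<theta>. 0 < \<theta> \<and> \<theta> \<le> 1 \<and> 2 * \<theta> * b_mean \<le> gap) (at_right 0)"
proof -
  have "min 1 (gap / (2 * b_mean + 1)) > 0" using gap_pos b_mean_nonneg by simp
  then show ?thesis
  proof (rule eventually_mono[OF eventually_at_right_0_le], safe)
    fix \<theta> :: real assume \<theta>: "0 < \<theta>" "\<theta> \<le> min 1 (gap / (2 * b_mean + 1))"
    then show "\<theta> \<le> 1" by simp
    have "2 * \<theta> * b_mean \<le> \<theta> * (2 * b_mean + 1)" using \<theta> by (simp add: algebra_simps)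
    also have "\<dots> \<le> gap" using \<theta> b_mean_nonneg by (simp add: field_simps)
    finally show "2 * \<theta> * b_mean \<le> gap" .
  qed
qed

lemma rho_first_order_bound:
  obtains C where "C \<ge> 0" "eventually (\<lambda>\<theta>. \<bar>rho \<theta> + \<theta> * b_mean\<bar> \<le> C * \<theta>^2) (at_right 0)"
proof
  define C where "C = 2 * inner_on I b_dev b_dev / (gap * dimI)"
  show "C \<ge> 0" unfolding C_def using inner_on_nonneg[of I b_dev] gap_pos dimI_pos by simp
  show "eventually (\<lambda>\<theta>. \<bar>rho \<theta> + \<theta> * b_mean\<bar> \<le> C * \<theta>^2) (at_right 0)"
    using eventually_small
  proof (rule eventually_mono)
    fix \<theta> assume "0 < \<theta> \<and> \<theta> \<le> 1 \<and> 2 * \<theta> * b_mean \<le> gap"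
    then show "\<bar>rho \<theta> + \<theta> * b_mean\<bar> \<le> C * \<theta>^2"
      using rho_le_first_order[of \<theta>] rho_ge_first_order[of \<theta>] \<open>C \<ge> 0\<close>
      unfolding C_def by (simp add: abs_le_iff algebra_simps)
  qed
qed

lemma rho_first_order: "(\<lambda>\<theta>. rho \<theta> + \<theta> * b_mean) \<in> O[at_right 0](\<lambda>\<theta>. \<theta>^2)"
proof -
  obtain C where "eventually (\<lambda>\<theta>. \<bar>rho \<theta> + \<theta> * b_mean\<bar> \<le> C * \<theta>^2) (at_right 0)"
    using rho_first_order_bound by blast
  then show ?thesis by (rule bigo_at_right_0I)
qed

lemma rho_linear_bound:
  obtains K where "K \<ge> 0" "eventually (\<lambda>\<theta>. \<bar>rho \<theta>\<bar> \<le> K * \<theta>) (at_right 0)"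
proof -
  obtain C where C: "C \<ge> 0" "eventually (\<lambda>\<theta>. \<bar>rho \<theta> + \<theta> * b_mean\<bar> \<le> C * \<theta>^2) (at_right 0)"
    using rho_first_order_bound by blast
  have "\<bar>rho \<theta>\<bar> \<le> (b_mean + C) * \<theta>"
    if "\<bar>rho \<theta> + \<theta> * b_mean\<bar> \<le> C * \<theta>^2" "0 < \<theta> \<and> \<theta> \<le> 1" for \<theta>
  proof -
    have "C * \<theta>^2 \<le> C * \<theta>" using C(1) that(2) by (simp add: power2_eq_square mult_left_le_one_le mult_left_mono)
    moreover have "\<theta> * b_mean \<ge> 0" using that(2) b_mean_nonneg by simp
    ultimately show ?thesis using that(1) unfolding abs_le_iff by (simp add: algebra_simps)
  qed
  then have "eventually (\<lambda>\<theta>. \<bar>rho \<theta>\<bar> \<le> (b_mean + C) * \<theta>) (at_right 0)"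
    using eventually_conj[OF C(2) eventually_at_right_0_le[of 1]] by (auto elim: eventually_mono)
  moreover have "b_mean + C \<ge> 0" using C(1) b_mean_nonneg by simp
  ultimately show ?thesis using that by blast
qed

end


lemma absorb_le:
  fixes Z Y t s :: real
  assumes "0 \<le> Z" "0 \<le> t" "t \<le> 1/4" "Z \<le> t * Y" "Y \<le> 2 * Z + 2 * s"
  shows "Z \<le> 4 * t * s"
proof -
  have "Z \<le> t * (2 * Z + 2 * s)" using assms(2,4,5) by (meson mult_left_mono order_trans)
  moreover have "t * (2 * Z) \<le> Z / 2" using assms(1-3) mult_right_mono[of t "1/4" "2 * Z"] by simp
  ultimately show ?thesis by (simp add: algebra_simps)
qed

lemma positive_root_close:
  fixes a n Y :: real
  assumes "0 < a" "0 < n" "0 \<le> Y" "a^2 * n + Y = 1"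
  shows "\<bar>a - 1 / sqrt n\<bar> \<le> Y / sqrt n"
proof -
  define s where "s = 1 / sqrt n"
  have s: "s > 0" "s^2 * n = 1" "n * s = sqrt n"
    unfolding s_def using assms(2) by (auto simp: power_divide real_sqrt_divide field_simps)
  have "(a - s) * (a + s) = - (Y / n)" using assms(2,4) s(2) by (simp add: field_simps power2_eq_square)
  moreover have "\<bar>a - s\<bar> * (a + s) = \<bar>(a - s) * (a + s)\<bar>"
    using assms(1) s(1) by (simp add: abs_mult)
  ultimately have "\<bar>a - s\<bar> * (a + s) = Y / n" using assms(2,3) by simp
  moreover have "\<bar>a - s\<bar> * s \<le> \<bar>a - s\<bar> * (a + s)" using assms(1) by (simp add: mult_left_mono)
  ultimately have "\<bar>a - s\<bar> * s \<le> Y / n" by simp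
  then have "\<bar>a - s\<bar> \<le> Y / n / s" by (subst pos_le_divide_eq[OF s(1)])
  also have "Y / n / s = Y / sqrt n" using s(3) by (simp add: divide_divide_eq_left)
  finally show ?thesis unfolding s_def .
qed

context gapped_generator
begin

text \<open>\<open>w\<close> is the first-order corrector: it solves \<open>M w = b - mean b\<close> on the orthogonal complement
  of the constants, so that \<open>1 + \<theta> w\<close> is an eigenvector of \<open>M - \<theta> diag b\<close> up to \<open>O(\<theta>\<^sup>2)\<close>.\<close>
context
  fixes w :: "'i \<Rightarrow> real"
  assumes w_perp: "inner_on I w (\<lambda>_. 1) = 0" and w_solves: "\<And>i. i \<in> I \<Longrightarrow> mat_vec I M w i = b_dev i"
begin

definition "second_coeff = - inner_on I w b_dev / dimI"

lemma inner_w_b_dev: "inner_on I w b_dev = - second_coeff * dimI"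
  unfolding second_coeff_def using dimI_pos by simp

lemma inner_w_mat_vec: "inner_on I z (mat_vec I M w) = inner_on I z b_dev"
  using w_solves by (rule inner_on_mat_vec_cong)

lemma second_coeff_nonneg: "second_coeff \<ge> 0"
proof -
  have "inner_on I w b_dev \<le> - gap * inner_on I w w"
    using gap_bound[OF w_perp] unfolding inner_w_mat_vec .
  also have "\<dots> \<le> 0" using gap_pos inner_on_nonneg[of I w] by (simp add: mult_nonneg_nonneg)
  finally show ?thesis unfolding second_coeff_def using dimI_pos by (simp add: divide_nonpos_pos)
qed

lemma rayleigh_add_corrector:
  "inner_on I (\<lambda>i. z i + t * w i) (mat_vec I M (\<lambda>i. z i + t * w i))
     = inner_on I z (mat_vec I M z) + 2 * t * inner_on I b_dev z + t^2 * inner_on I w b_dev"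
proof -
  have "inner_on I w (mat_vec I M z) = inner_on I b_dev z"
    using inner_on_mat_vec_symmetric[OF symmetric, of w z] inner_w_mat_vec[of w] inner_on_commute
    by (metis (no_types, lifting) inner_on_cong w_solves)
  then show ?thesis
    unfolding mat_vec_add mat_vec_scale inner_on_add_left inner_on_add_right inner_on_scale_left
      inner_on_scale_right inner_w_mat_vec
    using inner_on_commute[of I z b_dev] by (simp add: algebra_simps power2_eq_square)
qed

text \<open>Splitting off the corrector from the orthogonal part cancels the term linear in \<open>\<theta>\<close>.\<close>
lemma rayleigh_minus_diag_corrected:
  fixes a \<theta> :: real
  assumes y: "inner_on I y (\<lambda>_. 1) = 0"
  defines "z \<equiv> \<lambda>i. y i - \<theta> * a * w i"
  shows "inner_on I (\<lambda>i. a + y i) (mat_vec I (minus_diag M (\<lambda>i. \<theta> * b i)) (\<lambda>i. a + y i))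
    = inner_on I z (mat_vec I M z) + \<theta>^2 * second_coeff * a^2 * dimI - \<theta> * b_mean * a^2 * dimI
      - \<theta> * b_inner y y"
proof -
  have y_z: "y = (\<lambda>i. z i + (\<theta> * a) * w i)" unfolding z_def by simp
  have "inner_on I y (mat_vec I M y)
      = inner_on I z (mat_vec I M z) + 2 * (\<theta> * a) * inner_on I b_dev z + (\<theta> * a)^2 * inner_on I w b_dev"
    unfolding y_z by (rule rayleigh_add_corrector)
  moreover have "inner_on I b_dev z = inner_on I b_dev y + (\<theta> * a) * second_coeff * dimI"
    unfolding y_z inner_on_add_right inner_on_scale_right inner_on_commute[of I b_dev w] inner_w_b_dev
    by simp
  ultimately show ?thesis unfolding rayleigh_minus_diag_shift[OF y] inner_w_b_dev
    by (simp add: algebra_simps power2_eq_square)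
qed

lemma rho_le_second_order:
  assumes \<theta>: "\<theta> \<ge> 0" "2 * \<theta> * b_mean \<le> gap"
  shows "rho \<theta> \<le> - \<theta> * b_mean + \<theta>^2 * second_coeff + \<theta>^3 * (2 * b_mean * inner_on I w w / dimI)"
proof (rule rho_le_of_rayleigh_bound)
  fix x
  obtain a y where x: "x = (\<lambda>i. a + y i)" and y: "inner_on I y (\<lambda>_. 1) = 0"
    and "a = inner_on I x (\<lambda>_. 1) / dimI" by (rule split_constant)
  define z where "z = (\<lambda>i. y i - \<theta> * a * w i)"
  define C where "C = 2 * b_mean * inner_on I w w / dimI"
  have y_z: "y = (\<lambda>i. z i + (\<theta> * a) * w i)" unfolding z_def by simp
  have z: "inner_on I z (\<lambda>_. 1) = 0"
    unfolding z_def inner_on_diff_left inner_on_scale_left y w_perp by simp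
  have nonneg: "inner_on I z z \<ge> 0" "inner_on I y y \<ge> 0" "inner_on I w w \<ge> 0"
    by (rule inner_on_nonneg)+
  have "inner_on I y y \<le> 2 * inner_on I z z + 2 * (\<theta> * a)^2 * inner_on I w w"
    using inner_on_add_square_le[of I z "\<lambda>i. \<theta> * a * w i"]
    unfolding y_z inner_on_scale_left inner_on_scale_right by (simp add: power2_eq_square)
  then have "\<theta> * b_mean * inner_on I y y \<le> \<theta> * b_mean * (2 * inner_on I z z + 2 * (\<theta> * a)^2 * inner_on I w w)"
    using \<theta> b_mean_nonneg by (simp add: mult_left_mono)
  moreover have "\<theta> * b_mean * (2 * inner_on I z z + 2 * (\<theta> * a)^2 * inner_on I w w)
      = 2 * \<theta> * b_mean * inner_on I z z + 2 * \<theta>^3 * b_mean * a^2 * inner_on I w w"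
    by (simp add: algebra_simps power2_eq_square power3_eq_cube)
  moreover have "2 * \<theta> * b_mean * inner_on I z z \<le> gap * inner_on I z z"
    using \<theta> nonneg by (simp add: mult_right_mono)
  moreover have "\<theta>^2 * second_coeff * inner_on I y y \<ge> 0" "\<theta>^3 * C * inner_on I y y \<ge> 0"
    using second_coeff_nonneg nonneg b_mean_nonneg dimI_pos \<theta> unfolding C_def by simp_all
  moreover have "\<theta>^3 * C * (a^2 * dimI) = 2 * \<theta>^3 * b_mean * a^2 * inner_on I w w"
    unfolding C_def using dimI_pos by (simp add: field_simps)
  moreover have "\<theta> * b_inner y y \<ge> 0" using b_inner_nonneg \<theta> by simp
  moreover note gap_bound[OF z]
  moreover have "(- \<theta> * b_mean + \<theta>^2 * second_coeff + \<theta>^3 * C) * inner_on I x x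
     = - \<theta> * b_mean * a^2 * dimI - \<theta> * b_mean * inner_on I y y + \<theta>^2 * second_coeff * a^2 * dimI
       + \<theta>^2 * second_coeff * inner_on I y y + \<theta>^3 * C * (a^2 * dimI) + \<theta>^3 * C * inner_on I y y"
    unfolding x inner_shift[OF y] by (simp add: algebra_simps)
  ultimately show "inner_on I x (mat_vec I (minus_diag M (\<lambda>i. \<theta> * b i)) x)
      \<le> (- \<theta> * b_mean + \<theta>^2 * second_coeff + \<theta>^3 * (2 * b_mean * inner_on I w w / dimI)) * inner_on I x x"
    unfolding C_def[symmetric] x rayleigh_minus_diag_corrected[OF y] z_def[symmetric] by linarith
qed



lemma rho_ge_second_order:
  assumes \<theta>: "0 \<le> \<theta>" "\<theta> \<le> 1"
  shows "rho \<theta> \<ge> - \<theta> * b_mean + \<theta>^2 * second_coeff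
                     - \<theta>^3 * ((b_inner w w + second_coeff * inner_on I w w) / dimI)"
proof -
  define K where "K = (b_inner w w + second_coeff * inner_on I w w) / dimI"
  define x where "x i = 1 + \<theta> * w i" for i
  have \<theta>w: "inner_on I (\<lambda>i. \<theta> * w i) (\<lambda>_. 1) = 0" unfolding inner_on_scale_left w_perp by simp
  have Q: "inner_on I x (mat_vec I (minus_diag M (\<lambda>i. \<theta> * b i)) x)
      = \<theta>^2 * second_coeff * dimI - \<theta> * dimI * b_mean - \<theta>^3 * b_inner w w"
  proof -
    have "inner_on I (\<lambda>i. \<theta> * w i) (mat_vec I M (\<lambda>i. \<theta> * w i)) = - (\<theta>^2 * second_coeff * dimI)"
      unfolding mat_vec_scale inner_on_scale_left inner_on_scale_right inner_w_mat_vec inner_w_b_dev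
      by (simp add: power2_eq_square)
    moreover have "inner_on I b_dev (\<lambda>i. \<theta> * w i) = - \<theta> * second_coeff * dimI"
      unfolding inner_on_scale_right inner_on_commute[of I b_dev w] inner_w_b_dev by simp
    moreover have "b_inner (\<lambda>i. \<theta> * w i) (\<lambda>i. \<theta> * w i) = \<theta>^2 * b_inner w w"
      unfolding b_inner_def by (simp add: sum_distrib_left power2_eq_square mult_ac)
    ultimately show ?thesis unfolding x_def rayleigh_minus_diag_shift[OF \<theta>w]
      by (simp add: algebra_simps power2_eq_square power3_eq_cube)
  qed
  have X: "inner_on I x x = dimI + \<theta>^2 * inner_on I w w"
    unfolding x_def inner_shift[OF \<theta>w] inner_on_scale_left inner_on_scale_right by (simp add: power2_eq_square)
  have "inner_on I x (mat_vec I (minus_diag M (\<lambda>i. \<theta> * b i)) x)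
        - (- \<theta> * b_mean + \<theta>^2 * second_coeff - \<theta>^3 * K) * inner_on I x x
      = \<theta>^3 * second_coeff * inner_on I w w * (1 - \<theta>) + \<theta>^3 * b_mean * inner_on I w w
        + \<theta>^5 * K * inner_on I w w"
  proof -
    have D: "b_inner w w = K * dimI - second_coeff * inner_on I w w" unfolding K_def using dimI_pos by simp
    show ?thesis unfolding Q X D
      by (simp add: algebra_simps power2_eq_square power3_eq_cube numeral_eq_Suc)
  qed
  moreover have "K \<ge> 0"
    unfolding K_def using b_inner_nonneg second_coeff_nonneg inner_on_nonneg[of I w] dimI_pos by simp
  then have "\<theta>^3 * second_coeff * inner_on I w w * (1 - \<theta>) \<ge> 0" "\<theta>^3 * b_mean * inner_on I w w \<ge> 0"
      "\<theta>^5 * K * inner_on I w w \<ge> 0"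
    using \<theta> second_coeff_nonneg b_mean_nonneg inner_on_nonneg[of I w] by simp_all
  ultimately have "(- \<theta> * b_mean + \<theta>^2 * second_coeff - \<theta>^3 * K) * inner_on I x x
      \<le> rho \<theta> * inner_on I x x"
    using rayleigh_le_rho[of x \<theta>] by linarith
  moreover have "inner_on I x x > 0" unfolding X using dimI_pos inner_on_nonneg[of I w] by (simp add: add_pos_nonneg)
  ultimately show ?thesis unfolding K_def[symmetric] using mult_right_le_imp_le by blast
qed

lemma rho_second_order:
  "(\<lambda>\<theta>. rho \<theta> - (- \<theta> * b_mean + \<theta>^2 * second_coeff)) \<in> O[at_right 0](\<lambda>\<theta>. \<theta>^3)"
proof (rule bigo_at_right_0I)
  define C where "C = 2 * b_mean * inner_on I w w / dimI"
  define K where "K = (b_inner w w + second_coeff * inner_on I w w) / dimI"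
  have "C \<ge> 0" "K \<ge> 0" unfolding C_def K_def
    using b_mean_nonneg b_inner_nonneg second_coeff_nonneg inner_on_nonneg[of I w] dimI_pos by simp_all
  show "eventually (\<lambda>\<theta>. \<bar>rho \<theta> - (- \<theta> * b_mean + \<theta>^2 * second_coeff)\<bar> \<le> (C + K) * \<theta>^3) (at_right 0)"
    using eventually_small
  proof (rule eventually_mono)
    fix \<theta> :: real assume \<theta>: "0 < \<theta> \<and> \<theta> \<le> 1 \<and> 2 * \<theta> * b_mean \<le> gap"
    then have "\<theta>^3 * C \<le> (C + K) * \<theta>^3" "\<theta>^3 * K \<le> (C + K) * \<theta>^3"
      using \<open>C \<ge> 0\<close> \<open>K \<ge> 0\<close> by (simp_all add: algebra_simps)
    then show "\<bar>rho \<theta> - (- \<theta> * b_mean + \<theta>^2 * second_coeff)\<bar> \<le> (C + K) * \<theta>^3"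
      using rho_le_second_order[of \<theta>] rho_ge_second_order[of \<theta>] \<theta>
      unfolding C_def K_def by (simp add: abs_le_iff algebra_simps)
  qed
qed

text \<open>For an eigenvector \<open>W = a + y\<close> with \<open>y \<bottom> 1\<close>, the defect is the part of \<open>y\<close> not
  predicted by the corrector.\<close>
definition "defect \<theta> a y i = y i - \<theta> * a * w i"

context
  fixes \<theta> e a :: real and W y :: "'i \<Rightarrow> real"
  assumes eig: "\<And>i. i \<in> I \<Longrightarrow> mat_vec I (minus_diag M (\<lambda>i. \<theta> * b i)) W i = e * W i"
    and W_split: "W = (\<lambda>i. a + y i)" and y_perp: "inner_on I y (\<lambda>_. 1) = 0"
begin

lemma defect_perp: "inner_on I (defect \<theta> a y) (\<lambda>_. 1) = 0"
  unfolding defect_def inner_on_diff_left inner_on_scale_left y_perp w_perp by simp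

lemma defect_identity:
  "inner_on I (defect \<theta> a y) (mat_vec I M (defect \<theta> a y)) = \<theta> * b_inner (defect \<theta> a y) y + e * inner_on I (defect \<theta> a y) y"
proof -
  have M_defect: "mat_vec I M (defect \<theta> a y) i = \<theta> * (b i * (a + y i)) + e * (a + y i) - \<theta> * a * b_dev i"
    if i: "i \<in> I" for i
  proof -
    have "mat_vec I M (defect \<theta> a y) i = mat_vec I M y i - \<theta> * a * mat_vec I M w i"
      unfolding defect_def mat_vec_diff mat_vec_scale by (simp add: mult.assoc)
    also have "mat_vec I M y i = mat_vec I M W i" unfolding W_split using mat_vec_shift[OF i] by simp
    also have "\<dots> = \<theta> * (b i * W i) + e * W i"
      using eig[OF i] mat_vec_minus_diag[OF finite_I i, of M "\<lambda>i. \<theta> * b i" W] by simp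
    finally show ?thesis using w_solves[OF i] unfolding W_split by simp
  qed
  have "inner_on I (defect \<theta> a y) (mat_vec I M (defect \<theta> a y))
      = (\<Sum>i\<in>I. (defect \<theta> a y) i * (\<theta> * (b i * (a + y i)) + e * (a + y i) - \<theta> * a * b_dev i))"
    unfolding inner_on_def using M_defect by simp
  also have "\<dots> = \<theta> * a * (\<Sum>i\<in>I. b i * (defect \<theta> a y) i) + \<theta> * b_inner (defect \<theta> a y) y + e * a * (\<Sum>i\<in>I. (defect \<theta> a y) i)
      + e * inner_on I (defect \<theta> a y) y - \<theta> * a * inner_on I (defect \<theta> a y) b_dev"
    unfolding b_inner_def inner_on_def by (simp add: algebra_simps sum.distrib sum_subtractf sum_distrib_left)
  also have "(\<Sum>i\<in>I. b i * (defect \<theta> a y) i) = inner_on I b_dev (defect \<theta> a y)"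
    using sum_b_times[of "defect \<theta> a y"] defect_perp by simp
  also have "(\<Sum>i\<in>I. (defect \<theta> a y) i) = 0" using defect_perp unfolding inner_on_def by simp
  finally show ?thesis using inner_on_commute[of I "defect \<theta> a y" b_dev] by simp
qed

lemma defect_le:
  "inner_on I (defect \<theta> a y) (defect \<theta> a y) \<le> 2 * (\<theta>^2 * (\<Sum>i\<in>I. (b i)^2) + e^2) / gap^2 * inner_on I y y"
proof -
  define Z where "Z = inner_on I (defect \<theta> a y) (defect \<theta> a y)"
  define Y where "Y = inner_on I y y"
  define B where "B = (\<Sum>i\<in>I. (b i)^2)"
  have Y: "Y \<ge> 0" unfolding Y_def by (rule inner_on_nonneg)
  text \<open>Both terms of the defect identity are absorbed by AM-GM into a quarter of the gap each.\<close>
  have "- \<theta> * b_inner (defect \<theta> a y) y \<le> gap / 4 * Z + \<theta>^2 / gap * (\<Sum>j\<in>I. (b j)^2 * (y j)^2)"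
  proof -
    have "- \<theta> * b_inner (defect \<theta> a y) y = (\<Sum>j\<in>I. (- \<theta> * b j) * ((defect \<theta> a y) j * y j))"
      unfolding b_inner_def by (simp add: sum_distrib_left mult_ac)
    also have "\<dots> \<le> (\<Sum>j\<in>I. (gap/2) / 2 * ((defect \<theta> a y) j)^2 + (- \<theta> * b j)^2 / (2 * (gap/2)) * (y j)^2)"
      using gap_pos by (intro sum_mono amgm_weighted) simp
    also have "\<dots> = gap / 4 * Z + \<theta>^2 / gap * (\<Sum>j\<in>I. (b j)^2 * (y j)^2)"
      unfolding Z_def inner_on_def by (simp add: sum.distrib sum_distrib_left power2_eq_square mult_ac)
    finally show ?thesis .
  qed
  moreover have "(\<Sum>j\<in>I. (b j)^2 * (y j)^2) \<le> B * Y"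
  proof -
    have "(\<Sum>j\<in>I. (b j)^2 * (y j)^2) \<le> (\<Sum>j\<in>I. B * (y j)^2)"
      using member_le_sum[of _ I "\<lambda>j. (b j)^2"] finite_I unfolding B_def
      by (intro sum_mono mult_right_mono) auto
    then show ?thesis unfolding Y_def inner_on_def by (simp add: sum_distrib_left power2_eq_square)
  qed
  then have "\<theta>^2 / gap * (\<Sum>j\<in>I. (b j)^2 * (y j)^2) \<le> \<theta>^2 / gap * (B * Y)"
    using gap_pos by (intro mult_left_mono) auto
  moreover have "- e * inner_on I (defect \<theta> a y) y \<le> gap / 4 * Z + e^2 / gap * Y"
    using amgm_inner_on[of "gap/2" "-e" I "defect \<theta> a y" y] gap_pos unfolding Z_def Y_def by simp
  moreover have "inner_on I (defect \<theta> a y) (mat_vec I M (defect \<theta> a y)) \<le> - gap * Z"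
    unfolding Z_def using gap_bound[OF defect_perp] .
  ultimately have "gap / 2 * Z \<le> (\<theta>^2 * B + e^2) / gap * Y"
    using defect_identity by (simp add: add_divide_distrib algebra_simps)
  then show ?thesis
    using gap_pos unfolding Z_def[symmetric] Y_def[symmetric] B_def[symmetric]
    by (simp add: field_simps power2_eq_square)
qed

end



lemma unit_eigenvector_bounds:
  fixes K \<theta> e :: real
  defines "\<kappa> \<equiv> 2 * ((\<Sum>i\<in>I. (b i)^2) + K^2) / gap^2"
  assumes K: "0 \<le> K" and \<theta>: "0 < \<theta>" "\<theta> \<le> 1" "\<theta>^2 * \<kappa> \<le> 1/4" and e: "\<bar>e\<bar> \<le> K * \<theta>"
    and eig: "\<And>i. i \<in> I \<Longrightarrow> mat_vec I (minus_diag M (\<lambda>i. \<theta> * b i)) W i = e * W i"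
    and W_split: "W = (\<lambda>i. a + y i)" and y_perp: "inner_on I y (\<lambda>_. 1) = 0"
    and unit: "inner_on I W W = 1"
  shows "inner_on I (defect \<theta> a y) (defect \<theta> a y) \<le> \<theta>^4 * (4 * \<kappa> * inner_on I w w / dimI)"
    and "inner_on I y y \<le> \<theta>^2 * (2 * (4 * \<kappa> * inner_on I w w / dimI) + 2 * inner_on I w w / dimI)"
proof -
  define Z where "Z = inner_on I (defect \<theta> a y) (defect \<theta> a y)"
  define Y where "Y = inner_on I y y"
  define s where "s = \<theta>^2 * inner_on I w w / dimI"
  have Y: "Y \<ge> 0" and Z: "Z \<ge> 0" and w: "inner_on I w w \<ge> 0"
    unfolding Y_def Z_def by (rule inner_on_nonneg)+
  have \<kappa>: "\<kappa> \<ge> 0" unfolding \<kappa>_def by (simp add: sum_nonneg)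
  have "2 * (\<theta>^2 * (\<Sum>i\<in>I. (b i)^2) + e^2) / gap^2 \<le> \<theta>^2 * \<kappa>"
  proof -
    have "e^2 \<le> K^2 * \<theta>^2" using power_mono[OF e, of 2] by (simp add: power_mult_distrib)
    then show ?thesis unfolding \<kappa>_def using gap_pos by (simp add: field_simps)
  qed
  then have Z_Y: "Z \<le> \<theta>^2 * \<kappa> * Y"
    using defect_le[OF eig W_split y_perp] Y unfolding Z_def Y_def by (meson mult_right_mono order_trans)
  have "a^2 * dimI + Y = 1" using unit inner_shift[OF y_perp, of a] unfolding W_split Y_def by simp
  then have "a^2 \<le> 1 / dimI" using Y dimI_pos by (simp add: field_simps)
  then have "(\<theta> * a)^2 * inner_on I w w \<le> s"
    unfolding s_def using mult_right_mono[of "a^2" "1 / dimI" "\<theta>^2 * inner_on I w w"] w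
    by (simp add: power_mult_distrib mult_ac)
  moreover have "Y \<le> 2 * Z + 2 * ((\<theta> * a)^2 * inner_on I w w)"
  proof -
    have "Y = inner_on I (\<lambda>i. defect \<theta> a y i + \<theta> * a * w i) (\<lambda>i. defect \<theta> a y i + \<theta> * a * w i)"
      unfolding Y_def by (simp add: defect_def)
    then show ?thesis
      using inner_on_add_square_le[of I "defect \<theta> a y" "\<lambda>i. \<theta> * a * w i"]
      unfolding Z_def inner_on_scale_left inner_on_scale_right by (simp add: power2_eq_square mult_ac)
  qed
  ultimately have Y_Z: "Y \<le> 2 * Z + 2 * s" by linarith
  define C3 where "C3 = 4 * \<kappa> * inner_on I w w / dimI"
  have "Z \<le> 4 * (\<theta>^2 * \<kappa>) * s" using absorb_le[OF Z _ \<theta>(3) Z_Y Y_Z] \<kappa> by simp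
  then have Z_bound: "Z \<le> \<theta>^4 * C3"
    unfolding s_def C3_def by (simp add: power2_eq_square power4_eq_xxxx mult_ac)
  then show "Z \<le> \<theta>^4 * (4 * \<kappa> * inner_on I w w / dimI)" unfolding C3_def .
  have "\<theta>^4 \<le> \<theta>^2" using \<theta> by (simp add: power_decreasing)
  then have "\<theta>^4 * C3 \<le> \<theta>^2 * C3" unfolding C3_def using \<kappa> w dimI_pos by (intro mult_right_mono) auto
  moreover have "\<theta>^2 * (2 * C3 + 2 * inner_on I w w / dimI) = 2 * (\<theta>^2 * C3) + 2 * s"
    unfolding s_def by (simp add: algebra_simps)
  ultimately show "Y \<le> \<theta>^2 * (2 * (4 * \<kappa> * inner_on I w w / dimI) + 2 * inner_on I w w / dimI)"
    using Y_Z Z_bound unfolding C3_def[symmetric] by linarith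
qed

lemma unit_eigenvector_component_bound:
  fixes K \<theta> e :: real and W :: "'i \<Rightarrow> real"
  defines "\<kappa> \<equiv> 2 * ((\<Sum>i\<in>I. (b i)^2) + K^2) / gap^2"
  defines "C \<equiv> (2 * (4 * \<kappa> * inner_on I w w / dimI) + 2 * inner_on I w w / dimI) / sqrt dimI
                * (1 + sqrt (inner_on I w w)) + sqrt (4 * \<kappa> * inner_on I w w / dimI)"
  assumes K: "0 \<le> K" and \<theta>: "0 < \<theta>" "\<theta> \<le> 1" "\<theta>^2 * \<kappa> \<le> 1/4" and e: "\<bar>e\<bar> \<le> K * \<theta>"
    and eig: "\<And>i. i \<in> I \<Longrightarrow> mat_vec I (minus_diag M (\<lambda>i. \<theta> * b i)) W i = e * W i"
    and unit: "inner_on I W W = 1" and pos: "inner_on I W (\<lambda>_. 1) > 0" and i: "i \<in> I"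
  shows "\<bar>W i - (1 + \<theta> * w i) / sqrt dimI\<bar> \<le> C * \<theta>^2"
proof -
  obtain a y where W_split: "W = (\<lambda>i. a + y i)" and y_perp: "inner_on I y (\<lambda>_. 1) = 0"
    and a: "a = inner_on I W (\<lambda>_. 1) / dimI" by (rule split_constant)
  define s where "s = 1 / sqrt dimI"
  define C4 where "C4 = 2 * (4 * \<kappa> * inner_on I w w / dimI) + 2 * inner_on I w w / dimI"
  define C3 where "C3 = 4 * \<kappa> * inner_on I w w / dimI"
  note bounds = unit_eigenvector_bounds[OF K \<theta>[unfolded \<kappa>_def] e eig W_split y_perp unit,
      folded \<kappa>_def]
  have w: "inner_on I w w \<ge> 0" and \<kappa>: "\<kappa> \<ge> 0" and C3: "C3 \<ge> 0"
    unfolding C3_def \<kappa>_def using inner_on_nonneg[of I w] dimI_pos by (simp_all add: sum_nonneg)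
  have "a > 0" using a pos dimI_pos by simp
  moreover have "a^2 * dimI + inner_on I y y = 1" using inner_shift[OF y_perp, of a] unit unfolding W_split by simp
  ultimately have "\<bar>a - s\<bar> \<le> inner_on I y y / sqrt dimI"
    unfolding s_def using dimI_pos inner_on_nonneg[of I y] by (intro positive_root_close) auto
  also have "\<dots> \<le> \<theta>^2 * C4 / sqrt dimI"
    using bounds(2) dimI_pos unfolding C4_def by (simp add: divide_right_mono)
  finally have a_s: "\<bar>a - s\<bar> \<le> \<theta>^2 * C4 / sqrt dimI" .
  have "(\<theta>^2 * sqrt C3)^2 = \<theta>^4 * C3"
    using C3 by (simp add: power_mult_distrib flip: power_mult)
  then have "(defect \<theta> a y i)^2 \<le> (\<theta>^2 * sqrt C3)^2"
    using square_le_inner_on[OF finite_I i, of "defect \<theta> a y"] bounds(1) unfolding C3_def by simp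
  then have defect_i: "\<bar>defect \<theta> a y i\<bar> \<le> \<theta>^2 * sqrt C3"
    using power2_le_imp_le[of "\<bar>defect \<theta> a y i\<bar>" "\<theta>^2 * sqrt C3"] C3 by simp
  have "\<bar>w i\<bar> \<le> sqrt (inner_on I w w)"
    using real_sqrt_le_mono[OF square_le_inner_on[OF finite_I i, of w]] by simp
  then have "\<theta> * \<bar>w i\<bar> \<le> 1 * sqrt (inner_on I w w)" using \<theta> by (intro mult_mono) auto
  then have "\<bar>\<theta> * w i\<bar> \<le> sqrt (inner_on I w w)" using \<theta> by (simp add: abs_mult)
  then have w_i: "\<bar>1 + \<theta> * w i\<bar> \<le> 1 + sqrt (inner_on I w w)"
    using abs_triangle_ineq[of 1 "\<theta> * w i"] by linarith
  have "W i - (1 + \<theta> * w i) / sqrt dimI = (a - s) * (1 + \<theta> * w i) + defect \<theta> a y i"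
    unfolding W_split defect_def s_def by (simp add: algebra_simps)
  then have "\<bar>W i - (1 + \<theta> * w i) / sqrt dimI\<bar> \<le> \<bar>a - s\<bar> * \<bar>1 + \<theta> * w i\<bar> + \<bar>defect \<theta> a y i\<bar>"
    by (metis abs_mult abs_triangle_ineq)
  also have "\<dots> \<le> \<theta>^2 * C4 / sqrt dimI * (1 + sqrt (inner_on I w w)) + \<theta>^2 * sqrt C3"
    using a_s w_i defect_i by (intro add_mono mult_mono) auto
  also have "\<dots> = C * \<theta>^2" unfolding C_def C3_def C4_def by (simp add: algebra_simps)
  finally show ?thesis .
qed

lemma top_eigenvector_expansion:
  assumes W: "eventually (\<lambda>\<theta>. (\<forall>i\<in>I. mat_vec I (minus_diag M (\<lambda>i. \<theta> * b i)) (W \<theta>) i = rho \<theta> * W \<theta> i)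
      \<and> inner_on I (W \<theta>) (W \<theta>) = 1 \<and> inner_on I (W \<theta>) (\<lambda>_. 1) > 0) (at_right 0)"
    and i: "i \<in> I"
  shows "(\<lambda>\<theta>. W \<theta> i - (1 + \<theta> * w i) / sqrt dimI) \<in> O[at_right 0](\<lambda>\<theta>. \<theta>^2)"
proof -
  obtain K where K: "K \<ge> 0" "eventually (\<lambda>\<theta>. \<bar>rho \<theta>\<bar> \<le> K * \<theta>) (at_right 0)"
    by (rule rho_linear_bound)
  define \<kappa> where "\<kappa> = 2 * ((\<Sum>i\<in>I. (b i)^2) + K^2) / gap^2"
  have \<kappa>: "\<kappa> \<ge> 0" unfolding \<kappa>_def by (simp add: sum_nonneg)
  have small: "\<theta>^2 * \<kappa> \<le> 1/4" if "0 < \<theta>" "\<theta> \<le> min 1 (1 / (4 * \<kappa> + 1))" for \<theta>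
  proof -
    have "\<theta> * (4 * \<kappa> + 1) \<le> 1" using that \<kappa> by (simp add: field_simps)
    then have "\<theta> * \<kappa> \<le> 1/4" using that \<kappa> by (simp add: algebra_simps)
    moreover have "\<theta> * \<theta> \<le> \<theta>" using that by (simp add: mult_left_le_one_le)
    then have "\<theta>^2 * \<kappa> \<le> \<theta> * \<kappa>" using \<kappa> by (simp add: power2_eq_square mult_right_mono)
    ultimately show ?thesis by linarith
  qed
  have "eventually (\<lambda>\<theta>. 0 < \<theta> \<and> \<theta> \<le> min 1 (1 / (4 * \<kappa> + 1))) (at_right 0)"
    using \<kappa> by (intro eventually_at_right_0_le) simp
  then have "eventually (\<lambda>\<theta>. \<bar>W \<theta> i - (1 + \<theta> * w i) / sqrt dimI\<bar>
      \<le> ((2 * (4 * \<kappa> * inner_on I w w / dimI) + 2 * inner_on I w w / dimI) / sqrt dimI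
          * (1 + sqrt (inner_on I w w)) + sqrt (4 * \<kappa> * inner_on I w w / dimI)) * \<theta>^2) (at_right 0)"
    using W K(2)
  proof eventually_elim
    case (elim \<theta>)
    then show ?case
      using unit_eigenvector_component_bound[OF K(1), of \<theta> "rho \<theta>" "W \<theta>" i] small[of \<theta>] i
      unfolding \<kappa>_def by auto
  qed
  then show ?thesis by (rule bigo_at_right_0I)
qed

end

end


section \<open>The operator \<open>\<Theta>\<close> on \<open>T\<^sub>N\<close>\<close>

lemma mem_triN: "(j,l) \<in> triN N \<longleftrightarrow> j \<le> l \<and> l < N" unfolding triN_def by simp

lemma triN_subset: "triN N \<subseteq> {..<N} \<times> {..<N}" unfolding triN_def by auto

lemma finite_triN: "finite (triN N)" using finite_subset[OF triN_subset] by simp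

lemma triN_nonempty: "N \<ge> 1 \<Longrightarrow> triN N \<noteq> {}" using mem_triN[of 0 0 N] by auto

lemma sget_sym: "sget S j l = sget S l j" unfolding sget_def by auto

lemma sget_cong: "(\<And>q. q \<in> triN N \<Longrightarrow> S q = S' q) \<Longrightarrow> a < N \<Longrightarrow> b < N \<Longrightarrow> sget S a b = sget S' a b"
  unfolding sget_def by (auto simp: mem_triN)

lemma sget_triN: "(j,l) \<in> triN N \<Longrightarrow> sget S j l = S (j,l)" unfolding sget_def by (auto simp: mem_triN)

definition theta_at :: "nat \<Rightarrow> (nat \<Rightarrow> nat \<Rightarrow> real) \<Rightarrow> (nat \<Rightarrow> nat \<Rightarrow> real) \<Rightarrow> nat \<Rightarrow> nat \<Rightarrow> real" where
  "theta_at N G s j l = 2 * G j l * (if j \<noteq> l then 1 else 0) * (s j j + s l l - 2 * s j l)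
    + (\<Sum>n\<in>{..<N} - {j,l}. G l n * (s j n - s j l) + G j n * (s n l - s j l))"

lemma ThetaOp_eq_theta_at: "ThetaOp N G S (j,l) = theta_at N G (sget S) j l"
  unfolding ThetaOp_def theta_at_def by simp

lemma ThetaOp_cong:
  assumes p: "p \<in> triN N" and eq: "\<And>q. q \<in> triN N \<Longrightarrow> S q = S' q"
  shows "ThetaOp N G S p = ThetaOp N G S' p"
proof -
  obtain j l where pj: "p = (j,l)" by (cases p)
  have jl: "j < N" "l < N" using p pj mem_triN by auto
  have se: "\<And>a b. a < N \<Longrightarrow> b < N \<Longrightarrow> sget S a b = sget S' a b" using sget_cong[of N S S'] eq by blast
  show ?thesis unfolding pj ThetaOp_eq_theta_at theta_at_def using jl
    by (simp add: se)
qed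

lemma sget_linear: "sget (\<lambda>r. c * S r + S' r) a b = c * sget S a b + sget S' a b"
  unfolding sget_def by simp

lemma ThetaOp_linear: "ThetaOp N G (\<lambda>r. c * S r + S' r) p = c * ThetaOp N G S p + ThetaOp N G S' p"
proof -
  obtain j l where pj: "p = (j,l)" by (cases p)
  define D where "D = {..<N} - {j,l}"
  define f where "f s n = G l n * (s j n - s j l) + G j n * (s n l - s j l)" for s :: "nat \<Rightarrow> nat \<Rightarrow> real" and n
  define h where "h s = 2 * G j l * (if j \<noteq> l then 1 else 0) * (s j j + s l l - 2 * s j l)" for s :: "nat \<Rightarrow> nat \<Rightarrow> real"
  have th: "theta_at N G s j l = h s + sum (f s) D" for s unfolding theta_at_def h_def f_def D_def by simp
  define s1 where "s1 = sget S"
  define s2 where "s2 = sget S'"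
  have lin: "sget (\<lambda>r. c * S r + S' r) = (\<lambda>a b. c * s1 a b + s2 a b)"
    unfolding s1_def s2_def by (intro ext) (rule sget_linear)
  have "f (\<lambda>a b. c * s1 a b + s2 a b) n = c * f s1 n + f s2 n" for n unfolding f_def by (simp add: algebra_simps)
  hence "sum (f (\<lambda>a b. c * s1 a b + s2 a b)) D = c * sum (f s1) D + sum (f s2) D"
    by (simp add: sum.distrib sum_distrib_left)
  moreover have "h (\<lambda>a b. c * s1 a b + s2 a b) = c * h s1 + h s2" unfolding h_def by (simp add: algebra_simps)
  ultimately show ?thesis unfolding pj ThetaOp_eq_theta_at lin th s1_def[symmetric] s2_def[symmetric] by (simp add: algebra_simps)
qed

lemma ThetaOp_zero: "ThetaOp N G (\<lambda>r. 0) p = 0"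
proof -
  obtain j l where pj: "p = (j,l)" by (cases p)
  show ?thesis unfolding pj ThetaOp_eq_theta_at theta_at_def sget_def by simp
qed

lemma ThetaOp_const: "ThetaOp N G (\<lambda>r. 1) p = 0"
proof -
  obtain j l where pj: "p = (j,l)" by (cases p)
  show ?thesis unfolding pj ThetaOp_eq_theta_at theta_at_def sget_def by simp
qed

definition delta_at :: "nat \<times> nat \<Rightarrow> nat \<times> nat \<Rightarrow> real" where "delta_at q = (\<lambda>r. if r = q then 1 else 0)"

definition theta_matrix :: "nat \<Rightarrow> (nat \<Rightarrow> nat \<Rightarrow> real) \<Rightarrow> nat \<times> nat \<Rightarrow> nat \<times> nat \<Rightarrow> real" where
  "theta_matrix N G p q = ThetaOp N G (delta_at q) p"

lemma ThetaOp_sum: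
  assumes "finite Q"
  shows "ThetaOp N G (\<lambda>r. \<Sum>q\<in>Q. S q * delta_at q r) p = (\<Sum>q\<in>Q. S q * ThetaOp N G (delta_at q) p)"
  using assms
proof (induction Q rule: finite_induct)
  case empty
  then show ?case using ThetaOp_zero by simp
next
  case (insert x F)
  have "(\<lambda>r. \<Sum>q\<in>insert x F. S q * delta_at q r) = (\<lambda>r. S x * delta_at x r + (\<Sum>q\<in>F. S q * delta_at q r))"
    using insert by simp
  then show ?case using insert ThetaOp_linear by simp
qed

lemma ThetaOp_eq_mat_vec:
  assumes p: "p \<in> triN N"
  shows "ThetaOp N G S p = mat_vec (triN N) (theta_matrix N G) S p"
proof -
  have "ThetaOp N G S p = ThetaOp N G (\<lambda>r. \<Sum>q\<in>triN N. S q * delta_at q r) p"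
  proof (rule ThetaOp_cong[OF p])
    fix q assume q: "q \<in> triN N"
    have "(\<Sum>q'\<in>triN N. S q' * delta_at q' q) = (\<Sum>q'\<in>triN N. if q' = q then S q' else 0)"
      unfolding delta_at_def by (intro sum.cong) auto
    also have "\<dots> = S q" using q finite_triN by simp
    finally show "S q = (\<Sum>q'\<in>triN N. S q' * delta_at q' q)" by simp
  qed
  also have "\<dots> = (\<Sum>q\<in>triN N. S q * ThetaOp N G (delta_at q) p)" by (rule ThetaOp_sum[OF finite_triN])
  also have "\<dots> = mat_vec (triN N) (theta_matrix N G) S p" unfolding mat_vec_def theta_matrix_def by (simp add: mult.commute)
  finally show ?thesis .
qed

lemma gen_matrix_row_sum:
  assumes "gen_matrix N G" "l < N"
  shows "(\<Sum>n<N. G l n) = 0"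
proof -
  have "(\<Sum>n<N. G l n) = G l l + (\<Sum>n\<in>{..<N} - {l}. G l n)"
    using assms(2) by (simp add: sum.remove)
  then show ?thesis using assms unfolding gen_matrix_def by simp
qed

text \<open>Since the rows of \<open>\<Gamma>\<close> sum to zero, the sum over \<open>n \<notin> {j,l}\<close> in \<open>\<Theta>\<close> can be
  extended to all \<open>n\<close>, which gives \<open>(s\<Gamma> + \<Gamma>s)\<^sub>j\<^sub>l + \<Gamma>\<^sub>j\<^sub>l (s\<^sub>j\<^sub>j + s\<^sub>l\<^sub>l - 2 s\<^sub>j\<^sub>l)\<close>.\<close>
definition theta_rowsum_form :: "nat \<Rightarrow> (nat \<Rightarrow> nat \<Rightarrow> real) \<Rightarrow> (nat \<Rightarrow> nat \<Rightarrow> real) \<Rightarrow> nat \<Rightarrow> nat \<Rightarrow> real" where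
  "theta_rowsum_form N G s j l = (\<Sum>n<N. G l n * s j n) + (\<Sum>n<N. G j n * s n l) + G j l * (s j j + s l l - 2 * s j l)"

lemma theta_at_eq_rowsum_form:
  assumes G: "gen_matrix N G" and jl: "j < N" "l < N"
  shows "theta_at N G s j l = theta_rowsum_form N G s j l"
proof -
  define A where "A n = G l n * (s j n - s j l)" for n
  define B where "B n = G j n * (s n l - s j l)" for n
  have sA: "(\<Sum>n<N. A n) = (\<Sum>n<N. G l n * s j n)"
  proof -
    have "(\<Sum>n<N. A n) = (\<Sum>n<N. G l n * s j n) - s j l * (\<Sum>n<N. G l n)"
      unfolding A_def by (simp add: algebra_simps sum_subtractf sum_distrib_left)
    then show ?thesis using gen_matrix_row_sum[OF G jl(2)] by simp
  qed
  have sB: "(\<Sum>n<N. B n) = (\<Sum>n<N. G j n * s n l)"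
  proof -
    have "(\<Sum>n<N. B n) = (\<Sum>n<N. G j n * s n l) - s j l * (\<Sum>n<N. G j n)"
      unfolding B_def by (simp add: algebra_simps sum_subtractf sum_distrib_left)
    then show ?thesis using gen_matrix_row_sum[OF G jl(1)] by simp
  qed
  have G_sym: "G l j = G j l" using G jl unfolding gen_matrix_def by auto
  show ?thesis
  proof (cases "j = l")
    case True
    have "(\<Sum>n\<in>{..<N} - {j,l}. A n + B n) = (\<Sum>n<N. A n + B n) - (A j + B j)"
      using True jl by (simp add: sum_diff1)
    also have "A j + B j = 0" unfolding A_def B_def using True by simp
    finally have "(\<Sum>n\<in>{..<N} - {j,l}. A n + B n) = (\<Sum>n<N. G l n * s j n) + (\<Sum>n<N. G j n * s n l)"
      using sA sB by (simp add: sum.distrib)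
    then show ?thesis unfolding theta_at_def theta_rowsum_form_def A_def B_def using True by simp
  next
    case False
    have "(\<Sum>n\<in>{..<N} - {j,l}. A n + B n) = (\<Sum>n<N. A n + B n) - (A j + B j) - (A l + B l)"
    proof -
      have "{..<N} - {j,l} = ({..<N} - {j}) - {l}" by auto
      moreover have "l \<in> {..<N} - {j}" using False jl by auto
      ultimately show ?thesis using jl by (simp add: sum_diff1)
    qed
    also have "A j + B j = G l j * (s j j - s j l)" unfolding A_def B_def by simp
    also have "A l + B l = G j l * (s l l - s j l)" unfolding A_def B_def by simp
    finally have e: "(\<Sum>n\<in>{..<N} - {j,l}. A n + B n) = (\<Sum>n<N. G l n * s j n) + (\<Sum>n<N. G j n * s n l)
        - G j l * (s j j - s j l) - G j l * (s l l - s j l)"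
      using sA sB G_sym by (simp add: sum.distrib)
    show ?thesis unfolding theta_at_def theta_rowsum_form_def using False e unfolding A_def B_def
      by (simp add: algebra_simps)
  qed
qed


lemma triN_Suc: "triN (Suc N) = triN N \<union> (\<lambda>j. (j, N)) ` {..N}"
  unfolding triN_def by (auto simp: less_Suc_eq)

lemma double_sum_triN:
  fixes h :: "nat \<Rightarrow> nat \<Rightarrow> real"
  assumes "\<And>j l. j < N \<Longrightarrow> l < N \<Longrightarrow> h j l = h l j"
  shows "2 * (\<Sum>p\<in>triN N. h (fst p) (snd p)) = (\<Sum>j<N. \<Sum>l<N. h j l) + (\<Sum>j<N. h j j)"
  using assms
proof (induction N)
  case 0
  then show ?case unfolding triN_def by simp
next
  case (Suc N)
  have IH: "2 * (\<Sum>p\<in>triN N. h (fst p) (snd p)) = (\<Sum>j<N. \<Sum>l<N. h j l) + (\<Sum>j<N. h j j)"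
    using Suc.IH Suc.prems by simp
  have disj: "triN N \<inter> (\<lambda>j. (j, N)) ` {..N} = {}" unfolding triN_def by auto
  have "(\<Sum>p\<in>triN (Suc N). h (fst p) (snd p)) = (\<Sum>p\<in>triN N. h (fst p) (snd p)) + (\<Sum>p\<in>(\<lambda>j. (j, N)) ` {..N}. h (fst p) (snd p))"
    unfolding triN_Suc using disj finite_triN by (intro sum.union_disjoint) auto
  also have "(\<Sum>p\<in>(\<lambda>j. (j, N)) ` {..N}. h (fst p) (snd p)) = (\<Sum>j\<le>N. h j N)"
    by (subst sum.reindex) (auto simp: inj_on_def)
  also have "(\<Sum>j\<le>N. h j N) = (\<Sum>j<N. h j N) + h N N" by (simp add: lessThan_Suc_atMost[symmetric])
  finally have L: "(\<Sum>p\<in>triN (Suc N). h (fst p) (snd p)) = (\<Sum>p\<in>triN N. h (fst p) (snd p)) + (\<Sum>j<N. h j N) + h N N" by simp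
  have sy: "(\<Sum>l<N. h N l) = (\<Sum>j<N. h j N)" using Suc.prems by (intro sum.cong) auto
  have "(\<Sum>j<Suc N. \<Sum>l<Suc N. h j l) = (\<Sum>j<N. \<Sum>l<N. h j l) + (\<Sum>j<N. h j N) + (\<Sum>l<N. h N l) + h N N"
    by (simp add: sum.distrib)
  then show ?case using L IH sy by simp
qed

lemma gen_matrix_sym: "gen_matrix N G \<Longrightarrow> j < N \<Longrightarrow> l < N \<Longrightarrow> G j l = G l j"
  unfolding gen_matrix_def by auto

lemma gen_matrix_nonneg: "gen_matrix N G \<Longrightarrow> j < N \<Longrightarrow> l < N \<Longrightarrow> j \<noteq> l \<Longrightarrow> G j l \<ge> 0"
  unfolding gen_matrix_def by auto

lemma ordered_pair_in_triN: "j < N \<Longrightarrow> l < N \<Longrightarrow> (if j \<le> l then (j,l) else (l,j)) \<in> triN N"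
  by (auto simp: mem_triN)

lemma sget_le_bound: "(\<And>p. p \<in> triN N \<Longrightarrow> v p \<le> vm) \<Longrightarrow> j < N \<Longrightarrow> l < N \<Longrightarrow> sget v j l \<le> vm"
  unfolding sget_def by (auto simp: mem_triN)

context
  fixes N :: nat and G :: "nat \<Rightarrow> nat \<Rightarrow> real"
  assumes G: "gen_matrix N G"
begin

text \<open>\<open>2 \<langle>S, \<Theta> S'\<rangle>\<close> written as a sum over the full square \<open>{..<N}\<^sup>2\<close>
  (\<open>theta_form\<close> below) expands into these bilinear forms, which makes its symmetry visible.\<close>
definition "form_right s t = (\<Sum>j<N. \<Sum>l<N. \<Sum>n<N. s j l * G l n * t j n)"
definition "form_left s t = (\<Sum>j<N. \<Sum>l<N. \<Sum>n<N. s j l * G j n * t n l)"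
definition "form_diag s t = (\<Sum>j<N. \<Sum>l<N. s j l * G j l * t j j)"
definition "form_offdiag s t = (\<Sum>j<N. \<Sum>l<N. s j l * G j l * t j l)"

definition "symmetric_fun s \<longleftrightarrow> (\<forall>j<N. \<forall>l<N. s j l = s l j)"

lemma form_right_commute: "form_right s t = form_right t s"
proof -
  have "(\<Sum>l<N. \<Sum>n<N. s j l * G l n * t j n) = (\<Sum>l<N. \<Sum>n<N. t j l * G l n * s j n)" if "j < N" for j
  proof -
    have "(\<Sum>l<N. \<Sum>n<N. s j l * G l n * t j n) = (\<Sum>n<N. \<Sum>l<N. s j l * G l n * t j n)" by (rule sum.swap)
    also have "\<dots> = (\<Sum>l<N. \<Sum>n<N. t j l * G l n * s j n)"
    proof (intro sum.cong refl)
      fix x y assume "x \<in> {..<N}" "y \<in> {..<N}"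
      then show "s j y * G y x * t j x = t j x * G x y * s j y" using gen_matrix_sym[OF G, of y x] by (simp add: mult_ac)
    qed
    finally show ?thesis .
  qed
  then show ?thesis unfolding form_right_def by (rule sum.cong[OF refl]) simp
qed

lemma sum3_swap13: "(\<Sum>j<N. \<Sum>l<N. \<Sum>n<N. f j l n) = (\<Sum>n<N. \<Sum>l<N. \<Sum>j<N. (f j l n :: real))"
proof -
  have "(\<Sum>j<N. \<Sum>l<N. \<Sum>n<N. f j l n) = (\<Sum>j<N. \<Sum>n<N. \<Sum>l<N. f j l n)" by (rule sum.cong[OF refl], rule sum.swap)
  also have "\<dots> = (\<Sum>n<N. \<Sum>j<N. \<Sum>l<N. f j l n)" by (rule sum.swap)
  also have "\<dots> = (\<Sum>n<N. \<Sum>l<N. \<Sum>j<N. f j l n)" by (rule sum.cong[OF refl], rule sum.swap)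
  finally show ?thesis .
qed

lemma form_left_commute: "form_left s t = form_left t s"
proof -
  have "form_left s t = (\<Sum>n<N. \<Sum>l<N. \<Sum>j<N. s j l * G j n * t n l)" unfolding form_left_def by (rule sum3_swap13)
  also have "\<dots> = form_left t s" unfolding form_left_def
  proof (intro sum.cong refl)
    fix x y z assume "x \<in> {..<N}" "y \<in> {..<N}" "z \<in> {..<N}"
    then show "s z y * G z x * t x y = t x y * G x z * s z y" using gen_matrix_sym[OF G, of z x] by (simp add: mult_ac)
  qed
  finally show ?thesis .
qed

lemma form_offdiag_commute: "form_offdiag s t = form_offdiag t s" unfolding form_offdiag_def by (simp add: mult_ac)

lemma theta_rowsum_form_commute: "symmetric_fun t \<Longrightarrow> j < N \<Longrightarrow> l < N \<Longrightarrow> theta_rowsum_form N G t j l = theta_rowsum_form N G t l j"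
proof -
  assume t: "symmetric_fun t" and jl: "j < N" "l < N"
  have "(\<Sum>n<N. G l n * t j n) = (\<Sum>n<N. G l n * t n j)" using t unfolding symmetric_fun_def by (intro sum.cong) (auto simp: jl)
  moreover have "(\<Sum>n<N. G j n * t n l) = (\<Sum>n<N. G j n * t l n)" using t unfolding symmetric_fun_def by (intro sum.cong) (auto simp: jl)
  moreover have "t j l = t l j" "G j l = G l j" using t jl gen_matrix_sym[OF G] unfolding symmetric_fun_def by auto
  ultimately show ?thesis unfolding theta_rowsum_form_def by simp
qed

definition "theta_form s t = (\<Sum>j<N. \<Sum>l<N. s j l * theta_rowsum_form N G t j l) + (\<Sum>j<N. s j j * theta_rowsum_form N G t j j)"

lemma theta_form_expand:
  assumes s: "symmetric_fun s" and t: "symmetric_fun t"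
  shows "theta_form s t = form_right s t + form_left s t + 2 * form_diag s t + 2 * form_diag t s - 2 * form_offdiag s t"
proof -
  have a: "(\<Sum>j<N. \<Sum>l<N. s j l * theta_rowsum_form N G t j l) = form_right s t + form_left s t + form_diag s t + (\<Sum>j<N. \<Sum>l<N. s j l * G j l * t l l) - 2 * form_offdiag s t"
    unfolding theta_rowsum_form_def form_right_def form_left_def form_diag_def form_offdiag_def
    by (simp add: algebra_simps sum.distrib sum_distrib_left sum_subtractf)
  have b: "(\<Sum>j<N. \<Sum>l<N. s j l * G j l * t l l) = form_diag s t"
  proof -
    have "(\<Sum>j<N. \<Sum>l<N. s j l * G j l * t l l) = (\<Sum>l<N. \<Sum>j<N. s j l * G j l * t l l)" by (rule sum.swap)
    also have "\<dots> = form_diag s t" unfolding form_diag_def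
    proof (intro sum.cong refl)
      fix x y assume "x \<in> {..<N}" "y \<in> {..<N}"
      then show "s y x * G y x * t x x = s x y * G x y * t x x" using gen_matrix_sym[OF G, of y x] s unfolding symmetric_fun_def by simp
    qed
    finally show ?thesis .
  qed
  have c: "(\<Sum>j<N. s j j * theta_rowsum_form N G t j j) = 2 * form_diag t s"
  proof -
    have "s j j * theta_rowsum_form N G t j j = 2 * (\<Sum>l<N. t j l * G j l * s j j)" if "j < N" for j
    proof -
      have "(\<Sum>n<N. G j n * t n j) = (\<Sum>n<N. G j n * t j n)" using t that unfolding symmetric_fun_def by (intro sum.cong) auto
      then show ?thesis unfolding theta_rowsum_form_def by (simp add: sum_distrib_left sum_distrib_right mult_ac)
    qed
    then show ?thesis unfolding form_diag_def by (simp add: sum_distrib_left)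
  qed
  show ?thesis unfolding theta_form_def a b c by simp
qed

lemma theta_form_commute: "symmetric_fun s \<Longrightarrow> symmetric_fun t \<Longrightarrow> theta_form s t = theta_form t s"
proof -
  assume s: "symmetric_fun s" and t: "symmetric_fun t"
  show ?thesis using theta_form_expand[OF s t] theta_form_expand[OF t s] form_right_commute[of s t] form_left_commute[of s t] form_offdiag_commute[of s t] by linarith
qed

lemma symmetric_fun_sget: "symmetric_fun (sget S)" unfolding symmetric_fun_def using sget_sym by auto

lemma inner_ThetaOp_eq_theta_form: "2 * inner_on (triN N) S (ThetaOp N G S') = theta_form (sget S) (sget S')"
proof -
  define h where "h j l = sget S j l * theta_rowsum_form N G (sget S') j l" for j l
  have hs: "h j l = h l j" if "j < N" "l < N" for j l
    unfolding h_def using theta_rowsum_form_commute[OF symmetric_fun_sget that] sget_sym by metis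
  have "inner_on (triN N) S (ThetaOp N G S') = (\<Sum>p\<in>triN N. h (fst p) (snd p))"
    unfolding inner_on_def
  proof (intro sum.cong refl)
    fix p assume p: "p \<in> triN N"
    obtain j l where pj: "p = (j,l)" by (cases p)
    have jl: "j < N" "l < N" using p pj mem_triN by auto
    show "S p * ThetaOp N G S' p = h (fst p) (snd p)"
      unfolding pj h_def ThetaOp_eq_theta_at theta_at_eq_rowsum_form[OF G jl] using sget_triN p pj by simp
  qed
  then show ?thesis using double_sum_triN[of N h] hs unfolding theta_form_def h_def by simp
qed

lemma inner_ThetaOp_symmetric: "inner_on (triN N) S (ThetaOp N G S') = inner_on (triN N) (ThetaOp N G S) S'"
proof -
  have "2 * inner_on (triN N) S (ThetaOp N G S') = 2 * inner_on (triN N) S' (ThetaOp N G S)"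
    unfolding inner_ThetaOp_eq_theta_form using theta_form_commute symmetric_fun_sget by metis
  then show ?thesis using inner_on_commute by simp
qed

lemma symmetric_theta_matrix: "symmetric_on (triN N) (theta_matrix N G)"
  unfolding symmetric_on_def
proof (intro ballI)
  fix p q assume p: "p \<in> triN N" and q: "q \<in> triN N"
  have "theta_matrix N G p q = inner_on (triN N) (delta_at p) (ThetaOp N G (delta_at q))"
    unfolding theta_matrix_def delta_at_def using inner_on_delta_left[OF finite_triN p] by simp
  also have "\<dots> = inner_on (triN N) (ThetaOp N G (delta_at p)) (delta_at q)" by (rule inner_ThetaOp_symmetric)
  also have "\<dots> = theta_matrix N G q p"
    unfolding theta_matrix_def delta_at_def using inner_on_delta_left[OF finite_triN q] inner_on_commute by metis
  finally show "theta_matrix N G p q = theta_matrix N G q p" .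
qed

lemma ThetaOp_ordered_pair: "j < N \<Longrightarrow> l < N \<Longrightarrow> ThetaOp N G S (if j \<le> l then (j,l) else (l,j)) = theta_at N G (sget S) j l"
proof -
  assume jl: "j < N" "l < N"
  have "theta_at N G (sget S) l j = theta_at N G (sget S) j l"
    using theta_at_eq_rowsum_form[OF G] theta_rowsum_form_commute[OF symmetric_fun_sget] jl by metis
  then show ?thesis by (auto simp: ThetaOp_eq_theta_at)
qed

lemma inner_one_ThetaOp: "inner_on (triN N) (\<lambda>_. 1) (ThetaOp N G S) = 0"
proof -
  have "inner_on (triN N) (\<lambda>_. 1) (ThetaOp N G S) = inner_on (triN N) (ThetaOp N G (\<lambda>_. 1)) S" by (rule inner_ThetaOp_symmetric)
  also have "\<dots> = 0" unfolding inner_on_def using ThetaOp_const by simp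
  finally show ?thesis .
qed

lemma theta_at_terms_at_max:
  assumes le: "\<forall>a<N. \<forall>b<N. s a b \<le> vm" and jl: "j < N" "l < N" and max: "s j l = vm"
  shows "2 * G j l * (if j \<noteq> l then 1 else 0) * (s j j + s l l - 2 * s j l) \<le> 0"
    and "n \<in> {..<N} - {j,l} \<Longrightarrow> G l n * (s j n - s j l) \<le> 0"
    and "n \<in> {..<N} - {j,l} \<Longrightarrow> G j n * (s n l - s j l) \<le> 0"
proof -
  show "2 * G j l * (if j \<noteq> l then 1 else 0) * (s j j + s l l - 2 * s j l) \<le> 0"
  proof (cases "j = l")
    case False
    then have "G j l \<ge> 0" using gen_matrix_nonneg[OF G] jl by simp
    moreover have "s j j + s l l - 2 * s j l \<le> 0"
      using le[rule_format, OF jl(1) jl(1)] le[rule_format, OF jl(2) jl(2)] max by simp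
    ultimately show ?thesis using False by (simp add: mult_nonneg_nonpos)
  qed simp
  show "G l n * (s j n - s j l) \<le> 0" "G j n * (s n l - s j l) \<le> 0" if "n \<in> {..<N} - {j,l}"
    using that jl gen_matrix_nonneg[OF G, of l n] gen_matrix_nonneg[OF G, of j n] le[rule_format, of j n] le[rule_format, of n l] max
    by (auto intro: mult_nonneg_nonpos)
qed

lemma theta_at_max_spreads:
  assumes le: "\<forall>a<N. \<forall>b<N. s a b \<le> vm" and jl: "j < N" "l < N" and max: "s j l = vm"
    and nonneg: "theta_at N G s j l \<ge> 0" and n: "n < N" "l \<noteq> n" "G l n > 0"
  shows "s j n = vm"
proof -
  define T1 where "T1 = 2 * G j l * (if j \<noteq> l then 1 else 0) * (s j j + s l l - 2 * s j l)"
  define F where "F n = - (G l n * (s j n - s j l) + G j n * (s n l - s j l))" for n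
  note terms = theta_at_terms_at_max[where s=s and vm=vm, OF le jl max]
  have F: "F n \<ge> 0" if "n \<in> {..<N} - {j,l}" for n using terms(2,3)[OF that] unfolding F_def by simp
  have "theta_at N G s j l = T1 - sum F ({..<N} - {j,l})"
    unfolding theta_at_def T1_def F_def sum_negf by simp
  moreover have "sum F ({..<N} - {j,l}) \<ge> 0" using F by (rule sum_nonneg)
  ultimately have "T1 = 0" "sum F ({..<N} - {j,l}) = 0"
    using nonneg terms(1) unfolding T1_def[symmetric] by linarith+
  show ?thesis
  proof (cases "n = j")
    case True
    then have "s j j + s l l - 2 * s j l = 0"
      using \<open>T1 = 0\<close> n gen_matrix_sym[OF G, of l j] jl unfolding T1_def by auto
    then show ?thesis
      unfolding True using le[rule_format, OF jl(1) jl(1)] le[rule_format, OF jl(2) jl(2)] max by linarith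
  next
    case False
    then have nD: "n \<in> {..<N} - {j,l}" using n by auto
    then have "F n = 0" using \<open>sum F ({..<N} - {j,l}) = 0\<close> F sum_nonneg_eq_0_iff[of _ F] by blast
    then have "G l n * (s j n - s j l) = 0" using terms(2,3)[OF nD] unfolding F_def by linarith
    then show ?thesis using n max by simp
  qed
qed

text \<open>Irreducibility lets the maximal value spread from one entry to all of \<open>triN N\<close>.\<close>
lemma ThetaOp_max_principle:
  assumes irr: "irreducible_gen N G"
    and le: "\<And>p. p \<in> triN N \<Longrightarrow> v p \<le> vm" and p0: "p0 \<in> triN N" "v p0 = vm"
    and nonneg: "\<And>p. p \<in> triN N \<Longrightarrow> v p = vm \<Longrightarrow> ThetaOp N G v p \<ge> 0"
  shows "\<forall>p\<in>triN N. v p = vm"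
proof -
  define s where "s = sget v"
  define E where "E a b \<longleftrightarrow> a < N \<and> b < N \<and> a \<noteq> b \<and> G a b > 0" for a b
  have s_le: "\<forall>a<N. \<forall>b<N. s a b \<le> vm" unfolding s_def using sget_le_bound[of N v vm] le by blast
  have theta_nonneg: "theta_at N G s j l \<ge> 0" if "j < N" "l < N" "s j l = vm" for j l
  proof -
    let ?p = "if j \<le> l then (j,l) else (l,j)"
    have "?p \<in> triN N" using ordered_pair_in_triN that by blast
    moreover have "v ?p = vm" using that unfolding s_def sget_def by auto
    ultimately have "ThetaOp N G v ?p \<ge> 0" using nonneg by blast
    then show ?thesis using ThetaOp_ordered_pair that unfolding s_def by simp
  qed
  have reach: "s j l' = vm" if "E\<^sup>*\<^sup>* l l'" "j < N" "l < N" "s j l = vm" for j l l'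
    using that(1,3,4)
  proof (induction rule: rtranclp_induct)
    case (step y z)
    then have yz: "y < N" "z < N" "y \<noteq> z" "G y z > 0" and "s j y = vm" unfolding E_def by auto
    show ?case
      using theta_at_max_spreads[where s=s and vm=vm, OF s_le \<open>j < N\<close> yz(1) \<open>s j y = vm\<close>
          theta_nonneg[OF \<open>j < N\<close> yz(1) \<open>s j y = vm\<close>] yz(2-4)] .
  qed
  have path: "E\<^sup>*\<^sup>* a b" if "a < N" "b < N" for a b
    using irr that unfolding irreducible_gen_def E_def by blast
  obtain j0 l0 where p0_eq: "p0 = (j0,l0)" and j0: "j0 < N" "l0 < N" using p0(1) unfolding triN_def by auto
  have "s j0 l0 = vm" using p0 p0_eq sget_triN unfolding s_def by simp
  then have "s j0 j = vm" if "j < N" for j using reach[OF path[OF j0(2) that] j0] by simp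
  then have "s j j0 = vm" if "j < N" for j using that sget_sym unfolding s_def by metis
  then have all: "s j l = vm" if "j < N" "l < N" for j l
    using reach[OF path[OF j0(1) that(2)] that(1) j0(1)] that by simp
  show ?thesis
  proof
    fix p assume p: "p \<in> triN N"
    then obtain j l where "p = (j,l)" "j < N" "l < N" unfolding triN_def by auto
    then show "v p = vm" using all sget_triN p unfolding s_def by metis
  qed
qed

lemma ThetaOp_uminus: "ThetaOp N G (\<lambda>r. - v r) p = - ThetaOp N G v p"
  using ThetaOp_linear[of N G "-1" v "\<lambda>_. 0" p] ThetaOp_zero by simp

lemma ThetaOp_eigenvector_positive:
  assumes irr: "irreducible_gen N G" and ev: "\<And>p. p \<in> triN N \<Longrightarrow> ThetaOp N G v p = r * v p"
    and r: "r \<ge> 0" and p1: "p1 \<in> triN N" "v p1 > 0"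
  shows "\<forall>p\<in>triN N. v p > 0"
proof -
  define vm where "vm = Max (v ` triN N)"
  have fin: "finite (v ` triN N)" using finite_triN by simp
  have le: "v p \<le> vm" if "p \<in> triN N" for p unfolding vm_def using fin that by simp
  have "vm \<in> v ` triN N" unfolding vm_def using fin p1 by (intro Max_in) auto
  then obtain p0 where p0: "p0 \<in> triN N" "v p0 = vm" by auto
  have vmp: "vm > 0" using le[OF p1(1)] p1 by simp
  have "\<forall>p\<in>triN N. v p = vm"
  proof (rule ThetaOp_max_principle[of v vm p0, OF irr le p0])
    fix p assume "p \<in> triN N" "v p = vm"
    then show "ThetaOp N G v p \<ge> 0" using ev r vmp by simp
  qed
  then show ?thesis using vmp by simp
qed

lemma ThetaOp_eigenvector_sum_nonzero:
  assumes irr: "irreducible_gen N G" and R: "R \<ge> 0"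
    and ev: "\<And>p. p \<in> triN N \<Longrightarrow> ThetaOp N G v p = R * v p" and nz: "\<exists>p\<in>triN N. v p \<noteq> 0"
  shows "(\<Sum>p\<in>triN N. v p) \<noteq> 0"
proof -
  obtain p1 where p1: "p1 \<in> triN N" "v p1 \<noteq> 0" using nz by auto
  have evn: "ThetaOp N G (\<lambda>r. - v r) p = R * (- v p)" if "p \<in> triN N" for p
    using ev[OF that] ThetaOp_uminus by simp
  have "(\<forall>p\<in>triN N. v p > 0) \<or> (\<forall>p\<in>triN N. - v p > 0)"
  proof (cases "v p1 > 0")
    case True
    then show ?thesis using ThetaOp_eigenvector_positive[OF irr ev R] p1 by auto
  next
    case False
    then have "- v p1 > 0" using p1 by simp
    then show ?thesis using ThetaOp_eigenvector_positive[OF irr evn R, of p1] p1 by auto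
  qed
  then have "(\<Sum>p\<in>triN N. v p) > 0 \<or> (\<Sum>p\<in>triN N. - v p) > 0"
    using finite_triN p1(1) by (auto intro: sum_pos)
  then show ?thesis by (auto simp: sum_negf)
qed

text \<open>The gap is minus the top eigenvalue of \<open>\<Theta> - J / card T\<^sub>N\<close>, where \<open>J / card T\<^sub>N\<close>
  (all entries equal) is the orthogonal projection onto the constants.\<close>
lemma theta_matrix_spectral_gap:
  assumes irr: "irreducible_gen N G" and N1: "N \<ge> 1"
  shows "\<exists>\<gamma>. has_spectral_gap (triN N) (theta_matrix N G) \<gamma>"
proof -
  define T where "T = triN N"
  define nT where "nT = real (card T)"
  have finT: "finite T" and neT: "T \<noteq> {}" unfolding T_def using finite_triN triN_nonempty N1 by auto
  have nTp: "nT > 0" unfolding nT_def using finT neT by (simp add: card_gt_0_iff)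
  define K where "K p q = theta_matrix N G p q - 1 / nT" for p q
  have sym_K: "symmetric_on T K" using symmetric_theta_matrix unfolding symmetric_on_def K_def T_def by auto
  define R where "R = top_eigenvalue T K"
  have K_apply: "mat_vec T K x p = ThetaOp N G x p - (\<Sum>q\<in>T. x q) / nT" if "p \<in> T" for x p
  proof -
    have "mat_vec T K x p = mat_vec T (theta_matrix N G) x p - (\<Sum>q\<in>T. x q / nT)"
      unfolding mat_vec_def K_def by (simp add: left_diff_distrib sum_subtractf)
    also have "mat_vec T (theta_matrix N G) x p = ThetaOp N G x p"
      using ThetaOp_eq_mat_vec that unfolding T_def by simp
    finally show ?thesis by (simp add: sum_divide_distrib)
  qed
  have "R < 0"
  proof (rule ccontr)
    assume "\<not> R < 0"
    then have R: "R \<ge> 0" by simp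
    obtain v where v: "\<exists>p\<in>T. v p \<noteq> 0" "\<forall>p\<in>T. mat_vec T K v p = R * v p"
      using top_eigenvalue_is_eigenvalue[OF finT neT sym_K] unfolding R_def eigenvalue_on_def by auto
    define m where "m = (\<Sum>q\<in>T. v q) / nT"
    have ev: "ThetaOp N G v p - m = R * v p" if "p \<in> T" for p using v(2) K_apply that unfolding m_def by simp
    then have "(\<Sum>p\<in>T. ThetaOp N G v p - m) = (\<Sum>p\<in>T. R * v p)" by simp
    moreover have "(\<Sum>p\<in>T. ThetaOp N G v p) = 0" using inner_one_ThetaOp unfolding inner_on_def T_def by simp
    ultimately have "- (nT * m) = R * (nT * m)"
      unfolding m_def nT_def using nTp by (simp add: sum_subtractf sum_distrib_left[symmetric] nT_def)
    then have "nT * m * (1 + R) = 0" by (simp add: algebra_simps)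
    then have "m = 0" using nTp R by simp
    then have "(\<Sum>p\<in>T. v p) = 0" unfolding m_def using nTp by simp
    moreover have "ThetaOp N G v p = R * v p" if "p \<in> T" for p using ev[OF that] \<open>m = 0\<close> by simp
    ultimately show False using ThetaOp_eigenvector_sum_nonzero[OF irr R _ v(1)[unfolded T_def]] unfolding T_def by blast
  qed
  moreover have "inner_on T z (mat_vec T (theta_matrix N G) z) \<le> R * inner_on T z z"
    if "inner_on T z (\<lambda>_. 1) = 0" for z
  proof -
    have "(\<Sum>q\<in>T. z q) = 0" using that unfolding inner_on_def by simp
    then have "inner_on T z (mat_vec T (theta_matrix N G) z) = inner_on T z (mat_vec T K z)"
      using K_apply ThetaOp_eq_mat_vec unfolding T_def by (intro inner_on_cong) auto
    then show ?thesis unfolding R_def using rayleigh_le_top_eigenvalue[OF finT neT sym_K] by simp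
  qed
  ultimately have "has_spectral_gap T (theta_matrix N G) (- R)" unfolding has_spectral_gap_def by auto
  then show ?thesis unfolding T_def by blast
qed

end



section \<open>The eigenvalues \<open>\<mu>\<close> and \<open>\<lambda>\<close> as perturbed top eigenvalues\<close>

lemma card_triN: "real (card (triN N)) = real N * (real N + 1) / 2"
proof -
  have "2 * (\<Sum>p\<in>triN N. (\<lambda>j l. (1::real)) (fst p) (snd p)) = (\<Sum>j<N. \<Sum>l<N. (1::real)) + (\<Sum>j<N. (1::real))"
    by (rule double_sum_triN) auto
  then show ?thesis by (simp add: algebra_simps)
qed

definition pair_sum :: "(nat \<Rightarrow> real) \<Rightarrow> nat \<times> nat \<Rightarrow> real" where
  "pair_sum f p = f (fst p) + f (snd p)"

lemma sum_pair_sum: "(\<Sum>p\<in>triN N. pair_sum f p) = (real N + 1) * (\<Sum>j<N. f j)"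
proof -
  have "2 * (\<Sum>p\<in>triN N. (\<lambda>j l. f j + f l) (fst p) (snd p)) = (\<Sum>j<N. \<Sum>l<N. f j + f l) + (\<Sum>j<N. f j + f j)"
    by (rule double_sum_triN) auto
  moreover have "(\<Sum>j<N. \<Sum>l<N. f j + f l) = 2 * real N * (\<Sum>j<N. f j)"
    by (simp add: sum.distrib sum_distrib_left[symmetric] sum_distrib_right[symmetric] mult_ac)
  moreover have "(\<Sum>j<N. f j + f j) = 2 * (\<Sum>j<N. f j)" by (simp only: sum.distrib mult_2)
  ultimately show ?thesis unfolding pair_sum_def by (simp add: algebra_simps)
qed

lemma sum_pair_sum_square:
  assumes "(\<Sum>j<N. f j) = 0"
  shows "(\<Sum>p\<in>triN N. (pair_sum f p)^2) = (real N + 2) * (\<Sum>j<N. (f j)^2)"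
proof -
  have "2 * (\<Sum>p\<in>triN N. (\<lambda>j l. (f j + f l)^2) (fst p) (snd p))
      = (\<Sum>j<N. \<Sum>l<N. (f j + f l)^2) + (\<Sum>j<N. (f j + f j)^2)"
    by (rule double_sum_triN) (auto simp: add.commute)
  moreover have "(\<Sum>j<N. \<Sum>l<N. (f j + f l)^2) = 2 * real N * (\<Sum>j<N. (f j)^2)"
  proof -
    have "(\<Sum>j<N. \<Sum>l<N. (f j + f l)^2) = (\<Sum>j<N. \<Sum>l<N. (f j)^2 + 2 * f j * f l + (f l)^2)"
      by (simp add: power2_eq_square algebra_simps)
    also have "\<dots> = (\<Sum>j<N. real N * (f j)^2 + 2 * f j * (\<Sum>l<N. f l) + (\<Sum>l<N. (f l)^2))"
      by (simp add: sum.distrib sum_distrib_left)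
    also have "\<dots> = 2 * real N * (\<Sum>j<N. (f j)^2)"
      using assms by (simp add: sum.distrib sum_distrib_left mult.assoc)
    finally show ?thesis .
  qed
  moreover have "(\<Sum>j<N. (f j + f j)^2) = 4 * (\<Sum>j<N. (f j)^2)"
    by (simp add: power2_eq_square sum_distrib_left algebra_simps)
  ultimately show ?thesis unfolding pair_sum_def by (simp add: algebra_simps)
qed

lemma ThetaOp_minus_PsiOp:
  assumes "gen_matrix N G" "p \<in> triN N"
  shows "ThetaOp N G S p - PsiOp Lam S p = mat_vec (triN N) (minus_diag (theta_matrix N G) (pair_sum Lam)) S p"
proof -
  obtain j l where p: "p = (j,l)" by (cases p)
  have "PsiOp Lam S p = pair_sum Lam p * S p"
    unfolding PsiOp_def pair_sum_def p using sget_triN[of j l N S] assms(2) p by simp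
  then show ?thesis
    using ThetaOp_eq_mat_vec[OF assms(2)] mat_vec_minus_diag[OF finite_triN assms(2)] by simp
qed

lemma op_eigvec_iff:
  assumes "gen_matrix N G"
  shows "op_eigvec N G Lam e S \<longleftrightarrow> (\<exists>p\<in>triN N. S p \<noteq> 0)
    \<and> (\<forall>p\<in>triN N. mat_vec (triN N) (minus_diag (theta_matrix N G) (pair_sum Lam)) S p = e * S p)"
  unfolding op_eigvec_def using ThetaOp_minus_PsiOp[OF assms] by auto

lemma muF_eq_top_eigenvalue:
  assumes "gen_matrix N G"
  shows "muF N G Lam = - top_eigenvalue (triN N) (minus_diag (theta_matrix N G) (pair_sum Lam))"
proof -
  have "{e. op_eigval N G Lam e} = {e. eigenvalue_on (triN N) (minus_diag (theta_matrix N G) (pair_sum Lam)) e}"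
    unfolding op_eigval_def op_eigvec_iff[OF assms] eigenvalue_on_def ..
  then show ?thesis unfolding muF_def top_eigenvalue_def by simp
qed

lemma lamF_eq_top_eigenvalue: "lamF N G Lam = - top_eigenvalue {..<N} (minus_diag G Lam)"
proof -
  have "{e. mat_eigval N (\<lambda>j l. G j l - (if j = l then Lam j else 0)) e} = {e. eigenvalue_on {..<N} (minus_diag G Lam) e}"
    unfolding mat_eigval_def eigenvalue_on_def mat_vec_def minus_diag_def by auto
  then show ?thesis unfolding lamF_def top_eigenvalue_def by simp
qed

lemma pair_sum_scale: "pair_sum (\<lambda>j. \<theta> * L j) = (\<lambda>p. \<theta> * pair_sum L p)"
  unfolding pair_sum_def by (simp add: algebra_simps)

lemma gapped_generator_theta:
  assumes "N \<ge> 1" "gen_matrix N G" "irreducible_gen N G" "\<forall>j<N. L j \<ge> 0"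
  shows "gapped_generator (triN N) (theta_matrix N G) (pair_sum L)"
proof
  show "finite (triN N)" "triN N \<noteq> {}" using finite_triN triN_nonempty assms(1) by auto
  show "symmetric_on (triN N) (theta_matrix N G)" by (rule symmetric_theta_matrix[OF assms(2)])
  show "mat_vec (triN N) (theta_matrix N G) (\<lambda>_. 1) i = 0" if "i \<in> triN N" for i
    using ThetaOp_eq_mat_vec[OF that, of G "\<lambda>_. 1"] ThetaOp_const by simp
  show "\<exists>\<gamma>. has_spectral_gap (triN N) (theta_matrix N G) \<gamma>"
    by (rule theta_matrix_spectral_gap[OF assms(2,3,1)])
  show "pair_sum L i \<ge> 0" if "i \<in> triN N" for i
    using that assms(4) unfolding pair_sum_def triN_def by auto
qed

lemma mean_on_pair_sum:
  assumes "N \<ge> 1"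
  shows "mean_on (triN N) (pair_sum L) = 2 * ((\<Sum>j<N. L j) / real N)"
proof -
  have "(real N + 1) * (\<Sum>j<N. L j) / ((real N + 1) * (real N / 2)) = (\<Sum>j<N. L j) / (real N / 2)"
    by (rule nonzero_mult_divide_mult_cancel_left) simp
  moreover have "real N * (real N + 1) / 2 = (real N + 1) * (real N / 2)" by simp
  ultimately have "(real N + 1) * (\<Sum>j<N. L j) / (real N * (real N + 1) / 2) = 2 * ((\<Sum>j<N. L j) / real N)"
    by simp
  then show ?thesis by (simp add: mean_on_def card_triN sum_pair_sum)
qed

lemma muF_first_order:
  assumes "N \<ge> 1" "gen_matrix N G" "irreducible_gen N G" "\<forall>j<N. L j \<ge> 0"
  shows "(\<lambda>\<theta>. muF N G (\<lambda>j. \<theta> * L j) - 2 * \<theta> * ((\<Sum>j<N. L j) / real N)) \<in> O[at_right 0](\<lambda>\<theta>. \<theta>^2)"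
proof -
  interpret T: gapped_generator "triN N" "theta_matrix N G" "pair_sum L"
    by (rule gapped_generator_theta[OF assms])
  have "(\<lambda>\<theta>. muF N G (\<lambda>j. \<theta> * L j) - 2 * \<theta> * ((\<Sum>j<N. L j) / real N))
      = (\<lambda>\<theta>. - (T.rho \<theta> + \<theta> * T.b_mean))"
    unfolding muF_eq_top_eigenvalue[OF assms(2)] pair_sum_scale mean_on_pair_sum[OF assms(1)]
    by (simp add: fun_eq_iff algebra_simps)
  then show ?thesis using T.rho_first_order by (simp only: landau_o.big.uminus_in_iff)
qed



section \<open>Uniform rates\<close>

lemma irreducible_gen_uniform:
  assumes "g > 0" "\<forall>j<N. \<forall>l<N. j \<noteq> l \<longrightarrow> G j l = g"
  shows "irreducible_gen N G"
  unfolding irreducible_gen_def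
proof (intro allI impI)
  fix j l assume "j < N" "l < N"
  then show "(\<lambda>a b. a < N \<and> b < N \<and> a \<noteq> b \<and> G a b > 0)\<^sup>*\<^sup>* j l"
    using assms by (cases "j = l") (auto intro: r_into_rtranclp)
qed

locale uniform_rates =
  fixes N :: nat and G :: "nat \<Rightarrow> nat \<Rightarrow> real" and g :: real and L :: "nat \<Rightarrow> real"
  assumes N: "N \<ge> 1" and gen: "gen_matrix N G" and g_pos: "g > 0"
    and uniform: "\<forall>j<N. \<forall>l<N. j \<noteq> l \<longrightarrow> G j l = g" and L_nonneg: "\<forall>j<N. L j \<ge> 0"
begin

abbreviation "mean_L \<equiv> (\<Sum>j<N. L j) / real N"
abbreviation "var_L \<equiv> (\<Sum>j<N. (L j - mean_L)^2)"

definition "dev j = L j - mean_L"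

lemma N_pos: "real N > 0"
  using N by simp

lemma sum_dev: "(\<Sum>j<N. dev j) = 0"
  unfolding dev_def using N_pos by (simp add: sum_subtractf)

lemma G_diag: "j < N \<Longrightarrow> G j j = - (real N - 1) * g"
proof -
  assume j: "j < N"
  have "G j j = - (\<Sum>l\<in>{..<N} - {j}. G j l)" using gen j unfolding gen_matrix_def by blast
  also have "(\<Sum>l\<in>{..<N} - {j}. G j l) = (\<Sum>l\<in>{..<N} - {j}. g)" using uniform j by (intro sum.cong) auto
  also have "\<dots> = (real N - 1) * g" using j by (simp add: of_nat_diff)
  finally show ?thesis by (simp add: algebra_simps)
qed

lemma G_row: "l < N \<Longrightarrow> (\<Sum>n<N. G l n * x n) = g * (\<Sum>n<N. x n) - g * real N * x l"
proof -
  assume l: "l < N"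
  have "(\<Sum>n<N. G l n * x n) = G l l * x l + (\<Sum>n\<in>{..<N} - {l}. G l n * x n)"
    using l by (simp add: sum.remove)
  also have "(\<Sum>n\<in>{..<N} - {l}. G l n * x n) = g * (\<Sum>n\<in>{..<N} - {l}. x n)"
    using uniform l by (simp add: sum_distrib_left)
  also have "(\<Sum>n\<in>{..<N} - {l}. x n) = (\<Sum>n<N. x n) - x l" using l by (simp add: sum_diff1)
  finally show ?thesis using G_diag[OF l] by (simp add: algebra_simps)
qed

lemma mat_vec_G: "l < N \<Longrightarrow> (\<Sum>n<N. x n) = 0 \<Longrightarrow> mat_vec {..<N} G x l = - g * real N * x l"
  unfolding mat_vec_def using G_row by simp

lemma ThetaOp_pair_sum:
  assumes d: "(\<Sum>j<N. d j) = 0" and p: "p \<in> triN N"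
  shows "ThetaOp N G (\<lambda>q. c * pair_sum d q) p = - c * g * real N * pair_sum d p"
proof -
  obtain j l where pj: "p = (j,l)" and jl: "j < N" "l < N" using p unfolding triN_def by auto
  have s: "sget (\<lambda>q. c * pair_sum d q) = (\<lambda>a b. c * (d a + d b))"
    unfolding sget_def pair_sum_def by (intro ext) (auto simp: add.commute)
  have "(\<Sum>n<N. G l n) = 0" "(\<Sum>n<N. G j n) = 0" using gen_matrix_row_sum[OF gen] jl by auto
  moreover have "theta_rowsum_form N G (\<lambda>a b. c * (d a + d b)) j l
      = c * d j * (\<Sum>n<N. G l n) + c * (\<Sum>n<N. G l n * d n) + c * (\<Sum>n<N. G j n * d n) + c * d l * (\<Sum>n<N. G j n)"
    unfolding theta_rowsum_form_def by (simp add: algebra_simps sum.distrib sum_distrib_left)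
  ultimately have "theta_rowsum_form N G (\<lambda>a b. c * (d a + d b)) j l = - c * g * real N * (d j + d l)"
    using G_row[OF jl(1), of d] G_row[OF jl(2), of d] d by (simp add: algebra_simps)
  then show ?thesis
    unfolding pj ThetaOp_eq_theta_at theta_at_eq_rowsum_form[OF gen jl] s by (simp add: pair_sum_def)
qed

sublocale T: gapped_generator "triN N" "theta_matrix N G" "pair_sum L"
  by (rule gapped_generator_theta[OF N gen irreducible_gen_uniform[OF g_pos uniform] L_nonneg])

sublocale Gm: gapped_generator "{..<N}" G L
proof
  show "finite {..<N}" by simp
  show "{..<N} \<noteq> {}" using N by (metis lessThan_empty_iff not_one_le_zero)
  show "symmetric_on {..<N} G" using gen_matrix_sym[OF gen] unfolding symmetric_on_def by auto
  show "mat_vec {..<N} G (\<lambda>_. 1) i = 0" if "i \<in> {..<N}" for i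
    using gen_matrix_row_sum[OF gen, of i] that unfolding mat_vec_def by simp
  have "has_spectral_gap {..<N} G (g * real N)"
    unfolding has_spectral_gap_def
  proof (intro conjI allI impI)
    show "g * real N > 0" using g_pos N_pos by simp
    fix z assume "inner_on {..<N} z (\<lambda>_. 1) = 0"
    then have "(\<Sum>n<N. z n) = 0" unfolding inner_on_def by simp
    then have "inner_on {..<N} z (mat_vec {..<N} G z) = inner_on {..<N} z (\<lambda>i. - (g * real N) * z i)"
      by (intro inner_on_cong) (auto simp: mat_vec_G)
    then show "inner_on {..<N} z (mat_vec {..<N} G z) \<le> - (g * real N) * inner_on {..<N} z z"
      unfolding inner_on_scale_right by simp
  qed
  then show "\<exists>\<gamma>. has_spectral_gap {..<N} G \<gamma>" ..
  show "L i \<ge> 0" if "i \<in> {..<N}" for i using L_nonneg that by simp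
qed

text \<open>Both correctors are explicit because \<open>\<Gamma>\<close> acts as \<open>-g N\<close> on vectors of mean zero.\<close>
definition "w_T p = - pair_sum dev p / (g * real N)"
definition "w_G j = - dev j / (g * real N)"

lemma T_b_mean: "T.b_mean = 2 * mean_L"
  by (rule mean_on_pair_sum[OF N])

lemma T_b_dev: "T.b_dev p = pair_sum dev p"
  unfolding T.b_dev_def T_b_mean pair_sum_def dev_def by simp

lemma w_T_perp: "inner_on (triN N) w_T (\<lambda>_. 1) = 0"
  unfolding inner_on_def w_T_def using sum_pair_sum[of dev N] sum_dev
  by (simp add: sum_divide_distrib[symmetric] sum_negf)

lemma w_T_solves: "p \<in> triN N \<Longrightarrow> mat_vec (triN N) (theta_matrix N G) w_T p = T.b_dev p"
proof -
  assume p: "p \<in> triN N"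
  have "w_T = (\<lambda>q. (- 1 / (g * real N)) * pair_sum dev q)" unfolding w_T_def by (simp add: fun_eq_iff)
  then have "ThetaOp N G w_T p = pair_sum dev p"
    using ThetaOp_pair_sum[OF sum_dev p, of "- 1 / (g * real N)"] g_pos N_pos by simp
  then show ?thesis using ThetaOp_eq_mat_vec[OF p] T_b_dev by simp
qed

lemma T_second_coeff: "T.second_coeff w_T = 2 * (real N + 2) / ((real N)^2 * (real N + 1) * g) * var_L"
proof -
  have "inner_on (triN N) w_T T.b_dev = - (\<Sum>p\<in>triN N. (pair_sum dev p)^2) / (g * real N)"
    unfolding inner_on_def w_T_def T_b_dev by (simp add: sum_divide_distrib[symmetric] sum_negf power2_eq_square)
  also have "(\<Sum>p\<in>triN N. (pair_sum dev p)^2) = (real N + 2) * var_L"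
    unfolding sum_pair_sum_square[OF sum_dev] dev_def ..
  finally have inner: "inner_on (triN N) w_T T.b_dev = - ((real N + 2) * var_L) / (g * real N)" .
  have scale: "(real N + 2) * V / (g * real N) / (real N * (real N + 1) / 2)
      = 2 * (real N + 2) / ((real N)^2 * (real N + 1) * g) * V" for V
    using g_pos N_pos by (simp add: field_simps power2_eq_square)
  have "T.second_coeff w_T = - inner_on (triN N) w_T T.b_dev / real (card (triN N))"
    by (rule T.second_coeff_def[OF w_T_perp w_T_solves])
  also have "\<dots> = (real N + 2) * var_L / (g * real N) / (real N * (real N + 1) / 2)"
    unfolding inner card_triN by simp
  finally show ?thesis unfolding scale .
qed

lemma Gm_b_mean: "Gm.b_mean = mean_L"
  unfolding mean_on_def by simp

lemma Gm_b_dev: "Gm.b_dev j = dev j"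
  unfolding Gm.b_dev_def Gm_b_mean dev_def ..

lemma w_G_perp: "inner_on {..<N} w_G (\<lambda>_. 1) = 0"
  unfolding inner_on_def w_G_def using sum_dev by (simp add: sum_divide_distrib[symmetric] sum_negf)

lemma w_G_solves: "j \<in> {..<N} \<Longrightarrow> mat_vec {..<N} G w_G j = Gm.b_dev j"
proof -
  assume j: "j \<in> {..<N}"
  have "(\<Sum>n<N. w_G n) = 0" using w_G_perp unfolding inner_on_def by simp
  then show ?thesis using mat_vec_G[of j w_G] j g_pos N_pos unfolding w_G_def Gm_b_dev by (simp add: field_simps)
qed

lemma Gm_second_coeff: "Gm.second_coeff w_G = var_L / (g * (real N)^2)"
proof -
  have "inner_on {..<N} w_G Gm.b_dev = (\<Sum>j<N. - ((dev j)^2 / (g * real N)))"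
    unfolding inner_on_def w_G_def Gm_b_dev by (simp add: power2_eq_square)
  also have "\<dots> = - var_L / (g * real N)"
    unfolding sum_negf sum_divide_distrib[symmetric] dev_def by simp
  finally have inner: "inner_on {..<N} w_G Gm.b_dev = - var_L / (g * real N)" .
  have scale: "V / (g * real N) / real N = V / (g * (real N)^2)" for V by (simp add: power2_eq_square)
  have "Gm.second_coeff w_G = - inner_on {..<N} w_G Gm.b_dev / real (card {..<N})"
    by (rule Gm.second_coeff_def[OF w_G_perp w_G_solves])
  also have "\<dots> = var_L / (g * real N) / real N" unfolding inner by simp
  finally show ?thesis unfolding scale .
qed

lemma muF_eq_T_rho: "muF N G (\<lambda>j. \<theta> * L j) = - T.rho \<theta>"
  unfolding muF_eq_top_eigenvalue[OF gen] pair_sum_scale ..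

lemma lamF_eq_Gm_rho: "lamF N G (\<lambda>j. \<theta> * L j) = - Gm.rho \<theta>"
  unfolding lamF_eq_top_eigenvalue ..

end



context uniform_rates
begin

lemma muF_second_order:
  "(\<lambda>\<theta>. muF N G (\<lambda>j. \<theta> * L j)
      - (2 * \<theta> * mean_L - \<theta>^2 * (2 * (real N + 2) / ((real N)^2 * (real N + 1) * g)) * var_L))
    \<in> O[at_right 0](\<lambda>\<theta>. \<theta>^3)"
proof -
  have "(\<lambda>\<theta>. muF N G (\<lambda>j. \<theta> * L j)
      - (2 * \<theta> * mean_L - \<theta>^2 * (2 * (real N + 2) / ((real N)^2 * (real N + 1) * g)) * var_L))
    = (\<lambda>\<theta>. - (T.rho \<theta> - (- \<theta> * T.b_mean + \<theta>^2 * T.second_coeff w_T)))"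
    unfolding muF_eq_T_rho T_b_mean T_second_coeff by (simp add: algebra_simps)
  then show ?thesis
    using T.rho_second_order[OF w_T_perp w_T_solves] by (simp only: landau_o.big.uminus_in_iff)
qed

lemma eigenvector_first_order:
  assumes W: "\<forall>\<^sub>F \<theta> in at_right 0. op_eigvec N G (\<lambda>j. \<theta> * L j) (- muF N G (\<lambda>j. \<theta> * L j)) (W \<theta>)
      \<and> (\<Sum>p\<in>triN N. (W \<theta> p)^2) = 1 \<and> (\<forall>p\<in>triN N. W \<theta> p > 0)"
  shows "\<forall>(j,l)\<in>triN N. (\<lambda>\<theta>. W \<theta> (j,l) - (sqrt 2 / sqrt (real N * (real N + 1))
      + \<theta> * (- (sqrt 2 / sqrt (real N * (real N + 1))) / (g * real N) * (L j + L l - 2 * mean_L))))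
    \<in> O[at_right 0](\<lambda>\<theta>. \<theta>^2)"
proof (clarify)
  fix j l assume p: "(j, l) \<in> triN N"
  have "\<forall>\<^sub>F \<theta> in at_right 0.
      (\<forall>i\<in>triN N. mat_vec (triN N) (minus_diag (theta_matrix N G) (\<lambda>i. \<theta> * pair_sum L i)) (W \<theta>) i
          = T.rho \<theta> * W \<theta> i)
      \<and> inner_on (triN N) (W \<theta>) (W \<theta>) = 1 \<and> inner_on (triN N) (W \<theta>) (\<lambda>_. 1) > 0"
    using W
  proof eventually_elim
    case (elim \<theta>)
    then show ?case
      unfolding op_eigvec_iff[OF gen] pair_sum_scale muF_eq_T_rho inner_on_def
      using T.finite_I T.nonempty_I by (simp add: power2_eq_square sum_pos)
  qed
  then have "(\<lambda>\<theta>. W \<theta> (j,l) - (1 + \<theta> * w_T (j,l)) / sqrt T.dimI) \<in> O[at_right 0](\<lambda>\<theta>. \<theta>^2)"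
    using T.top_eigenvector_expansion[OF w_T_perp w_T_solves _ p] by blast
  moreover have "(1 + \<theta> * w_T (j,l)) / sqrt T.dimI = sqrt 2 / sqrt (real N * (real N + 1))
      + \<theta> * (- (sqrt 2 / sqrt (real N * (real N + 1))) / (g * real N) * (L j + L l - 2 * mean_L))" for \<theta>
  proof -
    define c where "c = sqrt 2 / sqrt (real N * (real N + 1))"
    have dim: "sqrt T.dimI = 1 / c" unfolding c_def card_triN by (simp add: real_sqrt_divide)
    have w: "w_T (j,l) = - (L j + L l - 2 * mean_L) / (g * real N)"
      unfolding w_T_def pair_sum_def dev_def by simp
    show ?thesis unfolding c_def[symmetric] dim w using g_pos N_pos by (simp add: field_simps)
  qed
  ultimately show "(\<lambda>\<theta>. W \<theta> (j,l) - (sqrt 2 / sqrt (real N * (real N + 1))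
      + \<theta> * (- (sqrt 2 / sqrt (real N * (real N + 1))) / (g * real N) * (L j + L l - 2 * mean_L))))
    \<in> O[at_right 0](\<lambda>\<theta>. \<theta>^2)" by simp
qed

text \<open>The first-order terms cancel since the mean of \<open>L\<^sub>j + L\<^sub>l\<close> over \<open>T\<^sub>N\<close> is twice the
  mean of \<open>L\<close>; the second-order coefficient of \<open>\<mu>\<close> exceeds twice that of \<open>\<lambda>\<close> by
  \<open>2 var_L / (N\<^sup>2 (N + 1) g)\<close>.\<close>
lemma muF_minus_two_lamF:
  "(\<lambda>\<theta>. muF N G (\<lambda>j. \<theta> * L j) - 2 * lamF N G (\<lambda>j. \<theta> * L j)
      - (- 2 * \<theta>^2 / ((real N)^2 * (real N + 1) * g) * var_L)) \<in> O[at_right 0](\<lambda>\<theta>. \<theta>^3)"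
proof -
  have D: "(real N)^2 * (real N + 1) * g = (real N + 1) * (g * (real N)^2)" by (simp add: algebra_simps)
  have "2 * (real N + 2) / ((real N)^2 * (real N + 1) * g)
      = (real N + 1) * 2 / ((real N + 1) * (g * (real N)^2)) + 2 / ((real N + 1) * (g * (real N)^2))"
    unfolding D add_divide_distrib[symmetric] by (simp add: algebra_simps)
  also have "(real N + 1) * 2 / ((real N + 1) * (g * (real N)^2)) = 2 / (g * (real N)^2)"
    by (rule nonzero_mult_divide_mult_cancel_left) simp
  finally have coeff: "2 * (real N + 2) / ((real N)^2 * (real N + 1) * g)
      = 2 / (g * (real N)^2) + 2 / ((real N)^2 * (real N + 1) * g)"
    unfolding D .
  have "(\<lambda>\<theta>. muF N G (\<lambda>j. \<theta> * L j) - 2 * lamF N G (\<lambda>j. \<theta> * L j)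
      - (- 2 * \<theta>^2 / ((real N)^2 * (real N + 1) * g) * var_L))
    = (\<lambda>\<theta>. 2 * (Gm.rho \<theta> - (- \<theta> * Gm.b_mean + \<theta>^2 * Gm.second_coeff w_G))
        - (T.rho \<theta> - (- \<theta> * T.b_mean + \<theta>^2 * T.second_coeff w_T)))"
    unfolding muF_eq_T_rho lamF_eq_Gm_rho T_b_mean Gm_b_mean T_second_coeff Gm_second_coeff coeff
    by (simp add: algebra_simps)
  then show ?thesis
    using Gm.rho_second_order[OF w_G_perp w_G_solves] T.rho_second_order[OF w_T_perp w_T_solves]
    by (simp only: landau_o.big.cmult_in_iff sum_in_bigo)
qed

lemma muF_minus_two_lamF_neg:
  assumes "\<exists>j<N. \<exists>l<N. L j \<noteq> L l"
  shows "\<forall>\<^sub>F \<theta> in at_right 0. muF N G (\<lambda>j. \<theta> * L j) - 2 * lamF N G (\<lambda>j. \<theta> * L j) < 0"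
proof (rule eventually_neg_if_bigo_expansion)
  show "(\<lambda>\<theta>. muF N G (\<lambda>j. \<theta> * L j) - 2 * lamF N G (\<lambda>j. \<theta> * L j)
      + 2 * var_L / ((real N)^2 * (real N + 1) * g) * \<theta>^2) \<in> O[at_right 0](\<lambda>\<theta>. \<theta>^3)"
    using muF_minus_two_lamF by (simp add: algebra_simps)
  obtain i where i: "i < N" "L i \<noteq> mean_L" using assms by metis
  have "(L i - mean_L)^2 \<le> var_L" using i(1) by (intro member_le_sum) auto
  moreover have "(L i - mean_L)^2 > 0" using i(2) by simp
  ultimately have "var_L > 0" by linarith
  then show "2 * var_L / ((real N)^2 * (real N + 1) * g) > 0" using g_pos N_pos by simp
qed

end

theorem mainTheorem9:
  fixes N :: nat and G :: "nat \<Rightarrow> nat \<Rightarrow> real" and L1 :: "nat \<Rightarrow> real"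
  assumes "N \<ge> 2"
    and "gen_matrix N G"
    and "irreducible_gen N G"
    and "\<forall>j<N. L1 j \<ge> 0"
  defines "lam1 \<equiv> (\<Sum>j<N. L1 j) / real N"
  shows "(\<lambda>\<theta>. muF N G (\<lambda>j. \<theta> * L1 j) - 2 * \<theta> * lam1) \<in> O[at_right 0](\<lambda>\<theta>. \<theta>^2)
    \<and> (\<forall>g>0. (\<forall>j<N. \<forall>l<N. j \<noteq> l \<longrightarrow> G j l = g) \<longrightarrow>
        ((\<lambda>\<theta>. muF N G (\<lambda>j. \<theta> * L1 j)
              - (2 * \<theta> * lam1 - \<theta>^2 * (2 * (real N + 2) / ((real N)^2 * (real N + 1) * g))
                   * (\<Sum>j<N. (L1 j - lam1)^2)))
           \<in> O[at_right 0](\<lambda>\<theta>. \<theta>^3))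
      \<and> (\<forall>W :: real \<Rightarrow> nat \<times> nat \<Rightarrow> real.
            (\<forall>\<^sub>F \<theta> in at_right 0.
               op_eigvec N G (\<lambda>j. \<theta> * L1 j) (- muF N G (\<lambda>j. \<theta> * L1 j)) (W \<theta>)
               \<and> (\<Sum>p\<in>triN N. (W \<theta> p)^2) = 1
               \<and> (\<forall>p\<in>triN N. W \<theta> p > 0))
            \<longrightarrow> (\<forall>(j,l)\<in>triN N.
                  (\<lambda>\<theta>. W \<theta> (j,l)
                      - (sqrt 2 / sqrt (real N * (real N + 1))
                         + \<theta> * (- (sqrt 2 / sqrt (real N * (real N + 1))) / (g * real N)
                                   * (L1 j + L1 l - 2 * lam1))))
                  \<in> O[at_right 0](\<lambda>\<theta>. \<theta>^2)))
      \<and> ((\<lambda>\<theta>. muF N G (\<lambda>j. \<theta> * L1 j) - 2 * lamF N G (\<lambda>j. \<theta> * L1 j)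
              - (- 2 * \<theta>^2 / ((real N)^2 * (real N + 1) * g) * (\<Sum>j<N. (L1 j - lam1)^2)))
           \<in> O[at_right 0](\<lambda>\<theta>. \<theta>^3))
      \<and> ((\<exists>j<N. \<exists>l<N. L1 j \<noteq> L1 l) \<longrightarrow>
           (\<forall>\<^sub>F \<theta> in at_right 0. muF N G (\<lambda>j. \<theta> * L1 j) - 2 * lamF N G (\<lambda>j. \<theta> * L1 j) < 0)))"
proof -
  have N: "N \<ge> 1" using assms(1) by simp
  have U: "uniform_rates N G g L1" if "g > 0" "\<forall>j<N. \<forall>l<N. j \<noteq> l \<longrightarrow> G j l = g" for g
    using that N assms(2,4) by unfold_locales
  show ?thesis
    unfolding lam1_def
    using muF_first_order[OF N assms(2-4)] uniform_rates.muF_second_order[OF U]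
      uniform_rates.eigenvector_first_order[OF U] uniform_rates.muF_minus_two_lamF[OF U]
      uniform_rates.muF_minus_two_lamF_neg[OF U]
    by blast
qed

end
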